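(* Let $\mathbf e=(e_1,\ldots,e_r)\in\mathbb{Z}^r$ and let $J_{\mathbf e}$ be the associated Jordan totient quotient of weight $w=\sum_i ie_i$. For every real $\beta$ there is a constant $C(\mathbf e,\beta)$ such that for $x\ge2$ \[ \sum_{n\le x}J_{\mathbf e}(n)n^\beta=\mathfrak{S}_{\mathbf e}M_{\beta+w}(x)+C(\mathbf e,\beta)+O_{\mathbf e,\beta}\big(x^{\beta+w}(\log x)^{|e_1|}\big). \]
   Context: $p$ denotes a prime. For $k\ge1$, $J_k(n)=n^k\prod_{p\mid n}(1-p^{-k})$. For $\mathbf e\in\mathbb{Z}^r$, $J_{\mathbf e}(n)=\prod_{i=1}^rJ_i(n)^{e_i}$, with weight $w=\sum_i ie_i$, and $\mathfrak{S}_{\mathbf e}=\prod_p\left(1+\frac{J_{\mathbf e}(p)p^{-w}-1}{p}\right)$. For real $\gamma$, $M_\gamma(x)=x^{\gamma+1}/(\gamma+1)$ if $\gamma\ne-1$ and $M_{-1}(x)=\log x$. *)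

theory Defs
  imports Complex_Main "HOL-Computational_Algebra.Primes"
begin

definition jordan :: "nat \<Rightarrow> nat \<Rightarrow> real" where
  "jordan k n = real n ^ k * (\<Prod>p\<in>prime_factors n. (1 - 1 / real p ^ k))"

definition jordan_quot :: "nat \<Rightarrow> (nat \<Rightarrow> int) \<Rightarrow> nat \<Rightarrow> real" where
  "jordan_quot r e n = (\<Prod>i=1..r. jordan i n powi e i)"

definition weight :: "nat \<Rightarrow> (nat \<Rightarrow> int) \<Rightarrow> int" where
  "weight r e = (\<Sum>i=1..r. int i * e i)"

definition sing_series :: "nat \<Rightarrow> (nat \<Rightarrow> int) \<Rightarrow> real" where
  "sing_series r e = lim (\<lambda>N. \<Prod>p\<in>{p. prime p \<and> p \<le> N}.
      1 + (jordan_quot r e p * real p powr (- real_of_int (weight r e)) - 1) / real p)"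

definition Mfun :: "real \<Rightarrow> real \<Rightarrow> real" where
  "Mfun \<gamma> x = (if \<gamma> \<noteq> -1 then x powr (\<gamma> + 1) / (\<gamma> + 1) else ln x)"

end

theory Submission
  imports Defs "HOL-Analysis.Analysis" "HOL-Real_Asymp.Real_Asymp"
begin

text \<open>Put \<open>\<gamma> = \<beta> + w\<close>. Then \<open>J_e(n) n^\<beta> = n^\<gamma> \<Prod>_{p | n} \<phi>(p)\<close> with
  \<open>\<phi>(p) = \<Prod>_i (1 - p^-i)^e_i = 1 - e_1/p + O(p^-2)\<close>. Expanding the product gives
  \<open>J_e(n) n^\<beta> = n^\<gamma> \<Sum>_{d | n} g(d)\<close> for the multiplicative \<open>g\<close> supported on squarefree numbers
  with \<open>g(p) = \<phi>(p) - 1\<close>, so \<open>\<Sum>_{d \<le> y} |g(d)| \<le> \<Prod>_{p \<le> y} (1 + |e_1|/p + O(p^-2)) = O((log y)^|e_1|)\<close>.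
  Hence \<open>\<Sum>_{n \<le> x} J_e(n) n^\<beta> = \<Sum>_{d \<le> x} g(d) d^\<gamma> \<Sum>_{m \<le> x/d} m^\<gamma>\<close>, and inserting
  \<open>\<Sum>_{m \<le> y} m^\<gamma> = M_\<gamma>(y) + c + O(y^\<gamma>)\<close> yields the main term \<open>(\<Sum>_d g(d)/d) M_\<gamma>(x)\<close>, whose
  coefficient is the Euler product \<open>\<SS>_e\<close>, a constant, and the error term. Every tail over
  \<open>d > x\<close> that occurs is estimated by splitting it into dyadic blocks.\<close>

section \<open>Squarefree numbers as sets of primes\<close>

text \<open>A finite set of primes \<open>P\<close> stands for the squarefree number \<open>\<Prod>P\<close>;
  \<open>prime_sets N\<close> thus encodes the squarefree numbers up to \<open>N\<close>.\<close>

definition prime_sets :: "nat \<Rightarrow> nat set set" where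
  "prime_sets N = {P. P \<subseteq> {p. prime p \<and> p \<le> N} \<and> \<Prod>P \<le> N}"

lemma finite_prime_sets: "finite (prime_sets N)"
  by (rule finite_subset[of _ "Pow {..N}"]) (auto simp: prime_sets_def)

lemma prime_sets_mono: "N \<le> M \<Longrightarrow> prime_sets N \<subseteq> prime_sets M"
  unfolding prime_sets_def by auto

lemma prod_primes_pos: "(\<And>p. p \<in> P \<Longrightarrow> prime p) \<Longrightarrow> 0 < (\<Prod>P :: nat)"
  by (metis prime_gt_0_nat prod_pos)

lemma prime_factors_prod_primes:
  assumes "finite P" "\<And>p. p \<in> P \<Longrightarrow> prime p"
  shows "prime_factors (\<Prod>P) = P"
proof -
  have "0 \<notin> (\<lambda>p. p) ` P" using assms(2) by force
  hence "prime_factors (\<Prod>P) = (\<Union>p\<in>P. prime_factors p)"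
    using prime_factors_prod[OF assms(1), of "\<lambda>p. p"] by simp
  also have "\<dots> = (\<Union>p\<in>P. {p})" using assms(2) by (simp add: prime_prime_factors)
  finally show ?thesis by simp
qed

lemma inj_on_prod_primes: "inj_on (\<lambda>P. \<Prod>P :: nat) {P. finite P \<and> (\<forall>p\<in>P. prime p)}"
proof (rule inj_onI)
  fix P Q :: "nat set"
  assume P: "P \<in> {P. finite P \<and> (\<forall>p\<in>P. prime p)}" and Q: "Q \<in> {P. finite P \<and> (\<forall>p\<in>P. prime p)}"
    and eq: "\<Prod>P = \<Prod>Q"
  have "P = prime_factors (\<Prod>P)" using P by (intro prime_factors_prod_primes[symmetric]) auto
  also have "\<dots> = prime_factors (\<Prod>Q)" by (simp only: eq)
  also have "\<dots> = Q" using Q by (intro prime_factors_prod_primes) auto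
  finally show "P = Q" .
qed

lemma prod_primes_dvd_iff:
  fixes n :: nat
  assumes "0 < n" "finite P" "\<And>p. p \<in> P \<Longrightarrow> prime p"
  shows "\<Prod>P dvd n \<longleftrightarrow> P \<subseteq> prime_factors n"
proof
  assume "\<Prod>P dvd n"
  hence "p dvd n" if "p \<in> P" for p
    using dvd_prodI[OF assms(2) that, of "\<lambda>p. p"] dvd_trans by blast
  thus "P \<subseteq> prime_factors n" using assms by (auto simp: in_prime_factors_iff)
next
  assume P: "P \<subseteq> prime_factors n"
  have "\<Prod>P dvd (\<Prod>p\<in>prime_factors n. p ^ multiplicity p n)"
  proof (rule prod_dvd_prod_subset2[OF finite_set_mset P])
    fix p assume "p \<in> P"
    hence "0 < multiplicity p n" using P by (auto simp: prime_factors_multiplicity)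
    thus "p dvd p ^ multiplicity p n" by (simp add: dvd_power)
  qed
  thus "\<Prod>P dvd n" using prime_factorization_nat[OF assms(1)] by simp
qed

lemma prod_primes_ge: "finite P \<Longrightarrow> (\<forall>p\<in>P. prime p) \<Longrightarrow> Q \<subseteq> P \<Longrightarrow> \<Prod>Q \<le> (\<Prod>P :: nat)"
  by (intro dvd_imp_le prod_dvd_prod_subset prod_primes_pos) auto

lemma prime_sets_iff: "P \<in> prime_sets N \<longleftrightarrow> finite P \<and> (\<forall>p\<in>P. prime p) \<and> \<Prod>P \<le> N"
proof
  assume P: "finite P \<and> (\<forall>p\<in>P. prime p) \<and> \<Prod>P \<le> N"
  have "p \<le> N" if "p \<in> P" for p
    using P prod_primes_ge[of P "{p}"] that by auto
  with P show "P \<in> prime_sets N" unfolding prime_sets_def by blast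
next
  assume "P \<in> prime_sets N"
  thus "finite P \<and> (\<forall>p\<in>P. prime p) \<and> \<Prod>P \<le> N"
    unfolding prime_sets_def by (auto intro: finite_subset[of _ "{..N}"])
qed

lemma prime_sets_subset: "P \<in> prime_sets N \<Longrightarrow> Q \<subseteq> P \<Longrightarrow> Q \<in> prime_sets N"
  unfolding prime_sets_iff using prod_primes_ge by (meson dual_order.trans finite_subset subset_iff)

text \<open>In the notation of the proof idea, \<open>jordan_local r e p = \<phi>(p)\<close> and
  \<open>jordan_coeff r e P = g(\<Prod>P)\<close>.\<close>

definition jordan_local :: "nat \<Rightarrow> (nat \<Rightarrow> int) \<Rightarrow> nat \<Rightarrow> real" where
  "jordan_local r e p = (\<Prod>i=1..r. (1 - 1 / real p ^ i) powi e i)"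

definition jordan_coeff :: "nat \<Rightarrow> (nat \<Rightarrow> int) \<Rightarrow> nat set \<Rightarrow> real" where
  "jordan_coeff r e P = (\<Prod>p\<in>P. jordan_local r e p - 1)"

lemma prod_power_int_distrib: "(\<Prod>x\<in>A. f x :: 'a :: field) powi k = (\<Prod>x\<in>A. f x powi k)"
  by (induction A rule: infinite_finite_induct) (auto simp: power_int_mult_distrib)

lemma jordan_quot_mult_powr:
  assumes "1 \<le> n"
  shows "jordan_quot r e n * real n powr \<beta> =
         real n powr (\<beta> + real_of_int (weight r e)) * (\<Prod>p\<in>prime_factors n. jordan_local r e p)"
proof -
  have n: "real n > 0" using assms by auto
  have "jordan i n powi e i = real n powr (real i * real_of_int (e i)) *
        (\<Prod>p\<in>prime_factors n. (1 - 1 / real p ^ i) powi e i)" for i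
  proof -
    have "(real n ^ i) powi e i = real n powi (int i * e i)" by (simp add: power_int_power)
    also have "\<dots> = real n powr (real i * real_of_int (e i))"
      using n powr_real_of_int'[of "real n" "int i * e i"] by simp
    finally show ?thesis
      unfolding jordan_def by (simp add: power_int_mult_distrib prod_power_int_distrib)
  qed
  hence "jordan_quot r e n = (\<Prod>i=1..r. real n powr (real i * real_of_int (e i))) *
      (\<Prod>i=1..r. \<Prod>p\<in>prime_factors n. (1 - 1 / real p ^ i) powi e i)"
    unfolding jordan_quot_def by (simp add: prod.distrib)
  also have "(\<Prod>i=1..r. real n powr (real i * real_of_int (e i))) = real n powr real_of_int (weight r e)"
    using n unfolding weight_def by (simp add: powr_sum)
  also have "(\<Prod>i=1..r. \<Prod>p\<in>prime_factors n. (1 - 1 / real p ^ i) powi e i) =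
      (\<Prod>p\<in>prime_factors n. jordan_local r e p)"
    unfolding jordan_local_def by (rule prod.swap)
  finally show ?thesis using n by (simp add: powr_add)
qed

lemma prod_jordan_local_eq_sum_coeff:
  "(\<Prod>p\<in>prime_factors n. jordan_local r e p) = (\<Sum>P\<in>Pow (prime_factors n). jordan_coeff r e P)"
  using prod_add[of "prime_factors n" "\<lambda>p. jordan_local r e p - 1" "\<lambda>_. 1"]
  by (simp add: jordan_coeff_def)

section \<open>The local factor at a prime \<open>p\<close> is \<open>1 - e\<^sub>1/p + O(1/p\<^sup>2)\<close>\<close>

definition affine_near_zero :: "real \<Rightarrow> (real \<Rightarrow> real) \<Rightarrow> bool" where
  "affine_near_zero a F \<longleftrightarrow> (\<exists>C. \<forall>t. 0 < t \<and> t \<le> 1/2 \<longrightarrow> \<bar>F t - 1 - a * t\<bar> \<le> C * t^2)"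

lemma affine_near_zero_mult:
  assumes "affine_near_zero a F" "affine_near_zero b H"
  shows "affine_near_zero (a + b) (\<lambda>t. F t * H t)"
proof -
  obtain C1 where C1: "\<And>t. 0 < t \<Longrightarrow> t \<le> 1/2 \<Longrightarrow> \<bar>F t - 1 - a * t\<bar> \<le> C1 * t^2"
    using assms(1) unfolding affine_near_zero_def by blast
  obtain C2 where C2: "\<And>t. 0 < t \<Longrightarrow> t \<le> 1/2 \<Longrightarrow> \<bar>H t - 1 - b * t\<bar> \<le> C2 * t^2"
    using assms(2) unfolding affine_near_zero_def by blast
  define D1 where "D1 = max C1 0"
  define D2 where "D2 = max C2 0"
  show ?thesis unfolding affine_near_zero_def
  proof (intro exI allI impI)
    fix t :: real assume t: "0 < t \<and> t \<le> 1/2"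
    have t2: "t^2 \<le> t" using t by (auto simp: power2_eq_square mult_le_cancel_left1)
    have e1: "\<bar>F t - 1 - a * t\<bar> \<le> D1 * t^2"
      using C1[of t] t unfolding D1_def by (smt (verit) mult_right_mono zero_le_power2)
    have e2: "\<bar>H t - 1 - b * t\<bar> \<le> D2 * t^2"
      using C2[of t] t unfolding D2_def by (smt (verit) mult_right_mono zero_le_power2)
    have H1: "\<bar>H t - 1\<bar> \<le> (\<bar>b\<bar> + D2) * t"
    proof -
      have "\<bar>H t - 1\<bar> \<le> \<bar>b * t\<bar> + D2 * t^2" using e2 by linarith
      also have "\<dots> = \<bar>b\<bar> * t + D2 * t^2" using t by (simp add: abs_mult)
      also have "\<dots> \<le> \<bar>b\<bar> * t + D2 * t" using t2 by (simp add: D2_def mult_left_mono)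
      finally show ?thesis by (simp add: algebra_simps)
    qed
    have H: "\<bar>H t\<bar> \<le> 1 + \<bar>b\<bar> + D2"
      using H1 t mult_left_le[of t "\<bar>b\<bar> + D2"] by (simp add: D2_def) linarith
    have "\<bar>(F t - 1 - a * t) * H t\<bar> \<le> D1 * t^2 * (1 + \<bar>b\<bar> + D2)"
      unfolding abs_mult using e1 H by (intro mult_mono) (auto simp: D1_def)
    moreover have "\<bar>a * t * (H t - 1)\<bar> \<le> \<bar>a\<bar> * (\<bar>b\<bar> + D2) * t^2"
      using mult_left_mono[OF H1, of "\<bar>a\<bar> * t"] t by (simp add: abs_mult power2_eq_square mult_ac)
    moreover have "F t * H t - 1 - (a + b) * t =
        (F t - 1 - a * t) * H t + (H t - 1 - b * t) + a * t * (H t - 1)"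
      by (simp add: algebra_simps)
    ultimately show "\<bar>F t * H t - 1 - (a + b) * t\<bar>
        \<le> (D1 * (1 + \<bar>b\<bar> + D2) + D2 + \<bar>a\<bar> * (\<bar>b\<bar> + D2)) * t^2"
      using e2 by (simp add: algebra_simps) linarith
  qed
qed

lemma affine_near_zero_power: "affine_near_zero a F \<Longrightarrow> affine_near_zero (real n * a) (\<lambda>t. F t ^ n)"
proof (induction n)
  case 0
  show ?case unfolding affine_near_zero_def by (intro exI[of _ 0]) auto
next
  case (Suc n)
  from affine_near_zero_mult[OF Suc.prems Suc.IH[OF Suc.prems]] show ?case
    by (simp add: algebra_simps)
qed

lemma affine_near_zero_prod:
  assumes "finite I" "\<And>i. i \<in> I \<Longrightarrow> affine_near_zero (a i) (F i)"
  shows "affine_near_zero (\<Sum>i\<in>I. a i) (\<lambda>t. \<Prod>i\<in>I. F i t)"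
  using assms
proof (induction I rule: finite_induct)
  case empty
  show ?case unfolding affine_near_zero_def by (intro exI[of _ 0]) auto
next
  case (insert i I)
  thus ?case using affine_near_zero_mult[of "a i" "F i"] by simp
qed

lemma affine_near_zero_one_minus: "affine_near_zero (-1) (\<lambda>t. 1 - t)"
  unfolding affine_near_zero_def by (intro exI[of _ 0]) auto

lemma affine_near_zero_inverse_one_minus: "affine_near_zero 1 (\<lambda>t. inverse (1 - t))"
  unfolding affine_near_zero_def
proof (intro exI[of _ 2] allI impI)
  fix t :: real assume t: "0 < t \<and> t \<le> 1/2"
  have "inverse (1 - t) - 1 - 1 * t = t^2 / (1 - t)"
    using t by (simp add: field_simps power2_eq_square)
  also have "\<bar>\<dots>\<bar> \<le> 2 * t^2" using t by (simp add: field_simps)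
  finally show "\<bar>inverse (1 - t) - 1 - 1 * t\<bar> \<le> 2 * t\<^sup>2" .
qed

lemma affine_near_zero_one_minus_power: "2 \<le> i \<Longrightarrow> affine_near_zero 0 (\<lambda>t. 1 - t ^ i)"
  unfolding affine_near_zero_def by (intro exI[of _ 1]) (auto simp: power_decreasing)

lemma affine_near_zero_inverse_one_minus_power:
  assumes "2 \<le> i"
  shows "affine_near_zero 0 (\<lambda>t. inverse (1 - t ^ i))"
  unfolding affine_near_zero_def
proof (intro exI[of _ 2] allI impI)
  fix t :: real assume t: "0 < t \<and> t \<le> 1/2"
  have ti: "t ^ i \<le> t^2" using t assms by (simp add: power_decreasing)
  have "t^2 \<le> 1/4" using power_mono[of t "1/2" 2] t by (simp add: power2_eq_square)
  hence u: "0 \<le> t ^ i" "t ^ i \<le> 1/4" using ti t by (simp, linarith)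
  have "inverse (1 - t ^ i) - 1 - 0 * t = t ^ i / (1 - t ^ i)"
    using u by (simp add: field_simps)
  also have "\<bar>\<dots>\<bar> \<le> 2 * t ^ i"
  proof -
    have "t ^ i \<le> 2 * t ^ i * (1 - t ^ i)"
      using mult_left_mono[of "3/4" "1 - t ^ i" "2 * t ^ i"] u by auto
    thus ?thesis using u by (simp add: divide_le_eq)
  qed
  also have "\<dots> \<le> 2 * t^2" using ti by simp
  finally show "\<bar>inverse (1 - t ^ i) - 1 - 0 * t\<bar> \<le> 2 * t\<^sup>2" .
qed

lemma affine_near_zero_one_minus_power_int:
  assumes "1 \<le> i"
  shows "affine_near_zero (if i = 1 then - real_of_int k else 0) (\<lambda>t. (1 - t ^ i) powi k)"
proof (cases "0 \<le> k")
  case True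
  hence eq: "(\<lambda>t. (1 - t ^ i) powi k) = (\<lambda>t. (1 - t ^ i) ^ nat k)"
    by (simp add: power_int_def)
  show ?thesis
    unfolding eq
    using affine_near_zero_power[OF affine_near_zero_one_minus, of "nat k"]
      affine_near_zero_power[OF affine_near_zero_one_minus_power, of i "nat k"] True assms
    by (cases "i = 1") auto
next
  case False
  hence eq: "(\<lambda>t. (1 - t ^ i) powi k) = (\<lambda>t. inverse (1 - t ^ i) ^ nat (-k))"
    by (simp add: power_int_def)
  show ?thesis
    unfolding eq
    using affine_near_zero_power[OF affine_near_zero_inverse_one_minus, of "nat (-k)"]
      affine_near_zero_power[OF affine_near_zero_inverse_one_minus_power, of i "nat (-k)"] False assms
    by (cases "i = 1") auto
qed

lemma jordan_local_approx:
  assumes "1 \<le> r"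
  obtains B where "0 \<le> B"
    "\<And>p. prime p \<Longrightarrow> \<bar>jordan_local r e p - 1 + real_of_int (e 1) / real p\<bar> \<le> B / real p ^ 2"
proof -
  have "affine_near_zero (\<Sum>i=1..r. if i = 1 then - real_of_int (e i) else 0)
      (\<lambda>t. \<Prod>i=1..r. (1 - t ^ i) powi e i)"
    by (intro affine_near_zero_prod affine_near_zero_one_minus_power_int) auto
  moreover have "(\<Sum>i=1..r. if i = 1 then - real_of_int (e i) else 0) = - real_of_int (e 1)"
    using assms by (simp add: sum.delta)
  ultimately obtain C where C: "\<And>t. 0 < t \<Longrightarrow> t \<le> 1/2 \<Longrightarrow>
     \<bar>(\<Prod>i=1..r. (1 - t ^ i) powi e i) - 1 + real_of_int (e 1) * t\<bar> \<le> C * t^2"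
    unfolding affine_near_zero_def by auto
  show ?thesis
  proof (rule that[of "max C 0"])
    fix p :: nat assume p: "prime p"
    have p2: "2 \<le> real p" using prime_ge_2_nat[OF p] by simp
    have "\<bar>jordan_local r e p - 1 + real_of_int (e 1) / real p\<bar> \<le> C / real p ^ 2"
      using C[of "1 / real p"] p2 by (simp add: jordan_local_def power_one_over)
    also have "\<dots> \<le> max C 0 / real p ^ 2" by (intro divide_right_mono) auto
    finally show "\<bar>jordan_local r e p - 1 + real_of_int (e 1) / real p\<bar> \<le> max C 0 / real p ^ 2" .
  qed simp
qed

section \<open>Sums of \<open>|jordan_coeff|\<close> over squarefree numbers\<close>

lemma sum_inverse_squares_le: "1 \<le> N \<Longrightarrow> (\<Sum>n=2..N. 1 / real n ^ 2) \<le> 1 - 1 / real N"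
proof (induction N rule: dec_induct)
  case (step N)
  have "1 / real (Suc N) ^ 2 \<le> 1 / (real N * real (Suc N))"
    using step.hyps by (intro divide_left_mono) (auto simp: power2_eq_square)
  also have "\<dots> = 1 / real N - 1 / real (Suc N)" using step.hyps by (simp add: field_simps)
  finally show ?case using step.IH by (simp add: atLeastAtMostSuc_conv)
qed simp

lemma harm_le_one_plus_ln: "1 \<le> N \<Longrightarrow> (harm N :: real) \<le> 1 + ln (real N)"
  using decseqD[OF decseq_harm_diff_ln, of 0 "N - 1"] by (simp add: harm_def)

lemma sum_prime_sets_recip_le:
  assumes "1 \<le> N"
  shows "(\<Sum>P\<in>prime_sets N. \<Prod>p\<in>P. 1 / real p) \<le> 1 + ln (real N)"
proof -
  have "(\<Sum>P\<in>prime_sets N. \<Prod>p\<in>P. 1 / real p) = (\<Sum>P\<in>prime_sets N. 1 / real (\<Prod>P))"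
    by (intro sum.cong refl) (simp add: prod_dividef)
  also have "\<dots> = (\<Sum>n\<in>(\<lambda>P. \<Prod>P) ` prime_sets N. 1 / real n)"
  proof -
    have "inj_on (\<lambda>P. \<Prod>P :: nat) (prime_sets N)"
      by (rule inj_on_subset[OF inj_on_prod_primes]) (auto simp: prime_sets_iff)
    thus ?thesis by (simp add: sum.reindex)
  qed
  also have "\<dots> \<le> (\<Sum>n=1..N. 1 / real n)"
  proof (rule sum_mono2)
    show "(\<lambda>P. \<Prod>P) ` prime_sets N \<subseteq> {1..N}"
    proof
      fix n assume "n \<in> (\<lambda>P. \<Prod>P) ` prime_sets N"
      then obtain P where "P \<in> prime_sets N" "n = \<Prod>P" by blast
      thus "n \<in> {1..N}" using prod_primes_pos[of P] by (simp add: prime_sets_iff Suc_le_eq)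
    qed
  qed auto
  also have "\<dots> = harm N" by (simp add: harm_def divide_inverse)
  finally show ?thesis using harm_le_one_plus_ln[OF assms] by linarith
qed

lemma sum_prime_sets_prod_le_exp:
  fixes c :: "nat \<Rightarrow> real"
  assumes c: "\<And>p. 0 \<le> c p" and B: "(\<Sum>p | prime p \<and> p \<le> N. c p) \<le> B"
  shows "(\<Sum>P\<in>prime_sets N. \<Prod>p\<in>P. c p) \<le> exp B"
proof -
  define Pr where "Pr = {p. prime p \<and> p \<le> N}"
  have fin: "finite Pr" unfolding Pr_def by (rule finite_subset[of _ "{..N}"]) auto
  have "(\<Sum>P\<in>prime_sets N. \<Prod>p\<in>P. c p) \<le> (\<Sum>P\<in>Pow Pr. \<Prod>p\<in>P. c p)"
    by (rule sum_mono2) (use fin c in \<open>auto simp: prime_sets_def Pr_def intro: prod_nonneg\<close>)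
  also have "\<dots> = (\<Prod>p\<in>Pr. c p + 1)"
    using prod_add[OF fin, of c "\<lambda>_. 1"] by simp
  also have "\<dots> \<le> (\<Prod>p\<in>Pr. exp (c p))"
    using c by (intro prod_mono) (auto simp: add.commute[of _ 1] exp_ge_add_one_self_aux)
  also have "\<dots> = exp (\<Sum>p\<in>Pr. c p)" using fin by (simp add: exp_sum)
  also have "\<dots> \<le> exp B" using B unfolding Pr_def by simp
  finally show ?thesis .
qed

lemma sum_prime_sets_prod_add_le:
  fixes u v :: "nat \<Rightarrow> real"
  assumes u: "\<And>p. 0 \<le> u p" and v: "\<And>p. 0 \<le> v p"
  shows "(\<Sum>P\<in>prime_sets N. \<Prod>p\<in>P. u p + v p)
    \<le> (\<Sum>Q\<in>prime_sets N. \<Prod>p\<in>Q. u p) * (\<Sum>R\<in>prime_sets N. \<Prod>p\<in>R. v p)"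
proof -
  have "(\<Sum>P\<in>prime_sets N. \<Prod>p\<in>P. u p + v p) =
        (\<Sum>P\<in>prime_sets N. \<Sum>X | X \<in> prime_sets N \<and> X \<subseteq> P. (\<Prod>p\<in>X. u p) * (\<Prod>p\<in>P - X. v p))"
  proof (intro sum.cong refl)
    fix P assume P: "P \<in> prime_sets N"
    have "Pow P = {X. X \<in> prime_sets N \<and> X \<subseteq> P}" using prime_sets_subset[OF P] by auto
    thus "(\<Prod>p\<in>P. u p + v p) = (\<Sum>X | X \<in> prime_sets N \<and> X \<subseteq> P. (\<Prod>p\<in>X. u p) * (\<Prod>p\<in>P - X. v p))"
      using prod_add[of P u v] P by (simp add: prime_sets_iff)
  qed
  also have "\<dots> = (\<Sum>X\<in>prime_sets N. \<Sum>P | P \<in> prime_sets N \<and> X \<subseteq> P. (\<Prod>p\<in>X. u p) * (\<Prod>p\<in>P - X. v p))"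
    by (rule sum.swap_restrict) (auto simp: finite_prime_sets)
  also have "\<dots> \<le> (\<Sum>X\<in>prime_sets N. (\<Prod>p\<in>X. u p) * (\<Sum>R\<in>prime_sets N. \<Prod>p\<in>R. v p))"
  proof (intro sum_mono)
    fix X assume X: "X \<in> prime_sets N"
    define A where "A = {P. P \<in> prime_sets N \<and> X \<subseteq> P}"
    have "inj_on (\<lambda>P. P - X) A" unfolding A_def by (rule inj_onI) blast
    hence "(\<Sum>P\<in>A. \<Prod>p\<in>P - X. v p) = (\<Sum>R\<in>(\<lambda>P. P - X) ` A. \<Prod>p\<in>R. v p)"
      by (simp add: sum.reindex)
    also have "\<dots> \<le> (\<Sum>R\<in>prime_sets N. \<Prod>p\<in>R. v p)"
      using v by (intro sum_mono2 finite_prime_sets prod_nonneg)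
        (auto simp: A_def intro: prime_sets_subset)
    finally show "(\<Sum>P | P \<in> prime_sets N \<and> X \<subseteq> P. (\<Prod>p\<in>X. u p) * (\<Prod>p\<in>P - X. v p))
          \<le> (\<Prod>p\<in>X. u p) * (\<Sum>R\<in>prime_sets N. \<Prod>p\<in>R. v p)"
      using u by (simp add: A_def flip: sum_distrib_left) (intro mult_left_mono prod_nonneg; simp)
  qed
  also have "\<dots> = (\<Sum>Q\<in>prime_sets N. \<Prod>p\<in>Q. u p) * (\<Sum>R\<in>prime_sets N. \<Prod>p\<in>R. v p)"
    by (simp add: sum_distrib_right)
  finally show ?thesis .
qed

text \<open>Splitting \<open>(a + 1 + B/p)/p = 1/p + (a + B/p)/p\<close> and using the previous lemma
  peels off one factor \<open>1 + ln N\<close> at a time.\<close>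

lemma sum_prime_sets_log_power:
  assumes B: "0 \<le> B"
  shows "\<exists>K\<ge>0. \<forall>N\<ge>1. (\<Sum>P\<in>prime_sets N. \<Prod>p\<in>P. (real a + B / real p) / real p) \<le> K * (1 + ln (real N)) ^ a"
proof (induction a)
  case 0
  have "(\<Sum>P\<in>prime_sets N. \<Prod>p\<in>P. (B / real p) / real p) \<le> exp B" if "1 \<le> N" for N
  proof (rule sum_prime_sets_prod_le_exp)
    have "(\<Sum>p | prime p \<and> p \<le> N. B / real p / real p) = (\<Sum>p | prime p \<and> p \<le> N. B * (1 / real p ^ 2))"
      by (simp add: power2_eq_square)
    also have "\<dots> \<le> (\<Sum>n=2..N. B * (1 / real n ^ 2))"
      by (rule sum_mono2) (use B in \<open>auto dest: prime_ge_2_nat\<close>)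
    also have "\<dots> = B * (\<Sum>n=2..N. 1 / real n ^ 2)" by (simp add: sum_distrib_left)
    also have "\<dots> \<le> B * 1"
    proof (rule mult_left_mono)
      have "0 \<le> 1 / real N" by simp
      thus "(\<Sum>n=2..N. 1 / real n ^ 2) \<le> 1" using sum_inverse_squares_le[OF that] by linarith
    qed (rule B)
    finally show "(\<Sum>p | prime p \<and> p \<le> N. B / real p / real p) \<le> B" by simp
  qed (use B in simp)
  thus ?case by (intro exI[of _ "exp B"]) auto
next
  case (Suc a)
  then obtain K where K: "0 \<le> K" "\<And>N. 1 \<le> N \<Longrightarrow>
      (\<Sum>P\<in>prime_sets N. \<Prod>p\<in>P. (real a + B / real p) / real p) \<le> K * (1 + ln (real N)) ^ a"
    by blast
  have "(\<Sum>P\<in>prime_sets N. \<Prod>p\<in>P. (real (Suc a) + B / real p) / real p) \<le> K * (1 + ln (real N)) ^ Suc a"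
    if N: "1 \<le> N" for N
  proof -
    have "(\<Sum>P\<in>prime_sets N. \<Prod>p\<in>P. (real (Suc a) + B / real p) / real p) =
          (\<Sum>P\<in>prime_sets N. \<Prod>p\<in>P. 1 / real p + (real a + B / real p) / real p)"
      by (intro sum.cong prod.cong refl) (simp add: add_divide_distrib)
    also have "\<dots> \<le> (\<Sum>Q\<in>prime_sets N. \<Prod>p\<in>Q. 1 / real p) *
        (\<Sum>R\<in>prime_sets N. \<Prod>p\<in>R. (real a + B / real p) / real p)"
      using B by (intro sum_prime_sets_prod_add_le) auto
    also have "\<dots> \<le> (1 + ln (real N)) * (K * (1 + ln (real N)) ^ a)"
      using N B by (intro mult_mono sum_prime_sets_recip_le K(2) sum_nonneg prod_nonneg) auto
    finally show ?thesis by (simp add: mult_ac)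
  qed
  thus ?case using K(1) by blast
qed

lemma sum_abs_jordan_coeff_le:
  assumes "1 \<le> r"
  shows "\<exists>K\<ge>0. \<forall>y\<ge>2. (\<Sum>P\<in>prime_sets (nat \<lfloor>y\<rfloor>). \<bar>jordan_coeff r e P\<bar>) \<le> K * ln y ^ nat \<bar>e 1\<bar>"
proof -
  define a where "a = nat \<bar>e 1\<bar>"
  obtain B where B: "0 \<le> B"
    "\<And>p. prime p \<Longrightarrow> \<bar>jordan_local r e p - 1 + real_of_int (e 1) / real p\<bar> \<le> B / real p ^ 2"
    using jordan_local_approx[OF assms] by blast
  obtain K where K: "0 \<le> K" "\<And>N. 1 \<le> N \<Longrightarrow>
      (\<Sum>P\<in>prime_sets N. \<Prod>p\<in>P. (real a + B / real p) / real p) \<le> K * (1 + ln (real N)) ^ a"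
    using sum_prime_sets_log_power[OF B(1)] by blast
  have coeff: "\<bar>jordan_coeff r e P\<bar> \<le> (\<Prod>p\<in>P. (real a + B / real p) / real p)"
    if "P \<in> prime_sets N" for P N
    unfolding jordan_coeff_def abs_prod
  proof (intro prod_mono conjI)
    fix p assume "p \<in> P"
    hence p: "prime p" using that by (auto simp: prime_sets_iff)
    hence "0 < real p" by (simp add: prime_gt_0_nat)
    moreover have "\<bar>jordan_local r e p - 1\<bar> \<le> \<bar>real_of_int (e 1) / real p\<bar> + B / real p ^ 2"
      using B(2)[OF p] by linarith
    ultimately show "\<bar>jordan_local r e p - 1\<bar> \<le> (real a + B / real p) / real p"
      by (simp add: a_def abs_divide power2_eq_square add_divide_distrib)
  qed auto
  have "(\<Sum>P\<in>prime_sets (nat \<lfloor>y\<rfloor>). \<bar>jordan_coeff r e P\<bar>) \<le> K * 3 ^ a * ln y ^ a" if y: "2 \<le> y" for y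
  proof -
    have N: "1 \<le> nat \<lfloor>y\<rfloor>" "real (nat \<lfloor>y\<rfloor>) \<le> y" using y by linarith+
    have "2/3 \<le> ln y" using ln2_ge_two_thirds ln_le_cancel_iff[of 2 y] y by linarith
    moreover have "ln (real (nat \<lfloor>y\<rfloor>)) \<le> ln y" using N by simp
    ultimately have "1 + ln (real (nat \<lfloor>y\<rfloor>)) \<le> 3 * ln y" by linarith
    hence "K * (1 + ln (real (nat \<lfloor>y\<rfloor>))) ^ a \<le> K * (3 * ln y) ^ a"
      using N K(1) by (intro mult_left_mono power_mono) auto
    moreover have "(\<Sum>P\<in>prime_sets (nat \<lfloor>y\<rfloor>). \<bar>jordan_coeff r e P\<bar>)
        \<le> (\<Sum>P\<in>prime_sets (nat \<lfloor>y\<rfloor>). \<Prod>p\<in>P. (real a + B / real p) / real p)"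
      by (rule sum_mono) (rule coeff)
    ultimately show ?thesis using K(2)[OF N(1)] by (simp add: power_mult_distrib mult_ac)
  qed
  thus ?thesis using K(1) by (intro exI[of _ "K * 3 ^ a"]) (auto simp: a_def)
qed

lemma LIMSEQ_dist_le:
  fixes f :: "nat \<Rightarrow> real"
  assumes "f \<longlonglongrightarrow> L" "\<And>M. N \<le> M \<Longrightarrow> \<bar>f M - f N\<bar> \<le> B"
  shows "\<bar>f N - L\<bar> \<le> B"
proof -
  have "(\<lambda>M. \<bar>f M - f N\<bar>) \<longlonglongrightarrow> \<bar>L - f N\<bar>" by (intro tendsto_intros assms(1))
  hence "\<bar>L - f N\<bar> \<le> B" by (rule LIMSEQ_le_const2) (use assms(2) in blast)
  thus ?thesis by linarith
qed

lemma convergent_with_rate: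
  fixes f :: "nat \<Rightarrow> real"
  assumes bd: "\<And>N M. N0 \<le> N \<Longrightarrow> N \<le> M \<Longrightarrow> \<bar>f M - f N\<bar> \<le> b N" and b: "b \<longlonglongrightarrow> 0"
  shows "\<exists>L. f \<longlonglongrightarrow> L \<and> (\<forall>N\<ge>N0. \<bar>f N - L\<bar> \<le> b N)"
proof -
  have "Cauchy f"
  proof (rule CauchyI)
    fix \<epsilon> :: real assume "0 < \<epsilon>"
    then obtain N1 where N1: "\<And>N. N1 \<le> N \<Longrightarrow> b N < \<epsilon> / 2"
      using order_tendstoD(2)[OF b, of "\<epsilon> / 2"] by (auto simp: eventually_sequentially)
    have "norm (f m - f n) < \<epsilon>" if "max N1 N0 \<le> m" "max N1 N0 \<le> n" for m n
      using bd[of "max N1 N0" m] bd[of "max N1 N0" n] N1[of "max N1 N0"] that by simp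
    thus "\<exists>M. \<forall>m\<ge>M. \<forall>n\<ge>M. norm (f m - f n) < \<epsilon>" by blast
  qed
  hence "f \<longlonglongrightarrow> lim f" by (simp add: Cauchy_convergent_iff convergent_LIMSEQ_iff)
  thus ?thesis using LIMSEQ_dist_le bd by blast
qed

section \<open>Power sums\<close>

lemma Mfun_has_real_derivative:
  assumes "0 < t"
  shows "(Mfun \<gamma> has_real_derivative t powr \<gamma>) (at t)"
proof (cases "\<gamma> = -1")
  case True
  hence "Mfun \<gamma> = ln" by (auto simp: Mfun_def fun_eq_iff)
  thus ?thesis using DERIV_ln_divide[OF assms] True assms by (simp add: powr_neg_one)
next
  case False
  hence "Mfun \<gamma> = (\<lambda>x. x powr (\<gamma> + 1) / (\<gamma> + 1))" by (auto simp: Mfun_def fun_eq_iff)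
  moreover have "((\<lambda>x. x powr (\<gamma> + 1) / (\<gamma> + 1)) has_real_derivative
      (\<gamma> + 1) * t powr (\<gamma> + 1 - 1) / (\<gamma> + 1)) (at t)"
    by (intro DERIV_cdivide has_real_derivative_powr assms)
  ultimately show ?thesis using False by (simp add: add_eq_0_iff)
qed

lemma powr_le_two_powr_abs_mult:
  fixes \<eta> n s :: real
  assumes "0 < \<eta>" "n / 2 \<le> \<eta>" "\<eta> \<le> n"
  shows "\<eta> powr s \<le> 2 powr \<bar>s\<bar> * n powr s"
proof (cases "0 \<le> s")
  case True
  have "\<eta> powr s \<le> n powr s" using assms True by (intro powr_mono2) auto
  also have "\<dots> \<le> 2 powr \<bar>s\<bar> * n powr s"
    using ge_one_powr_ge_zero[of 2 "\<bar>s\<bar>"] by (intro mult_le_cancel_right1[THEN iffD2]) auto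
  finally show ?thesis .
next
  case False
  have "\<eta> powr s \<le> (n / 2) powr s" using assms False by (intro powr_mono2') auto
  also have "\<dots> = n powr s / 2 powr s" using assms by (simp add: powr_divide)
  also have "\<dots> = 2 powr \<bar>s\<bar> * n powr s" using False by (simp add: powr_minus divide_inverse mult.commute)
  finally show ?thesis .
qed

lemma sum_powr_le_integral:
  fixes \<gamma> :: real
  assumes "\<gamma> < 1" "\<gamma> \<noteq> 0" "1 \<le> N" "N \<le> M"
  shows "(\<Sum>n\<in>{N<..M}. real n powr (\<gamma> - 1)) \<le> (real M powr \<gamma> - real N powr \<gamma>) / \<gamma>"
  using assms(4)
proof (induction M rule: dec_induct)
  case (step M)
  obtain \<zeta> where \<zeta>: "real M < \<zeta>" "\<zeta> < real (Suc M)"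
     "real (Suc M) powr \<gamma> - real M powr \<gamma> = (real (Suc M) - real M) * (\<gamma> * \<zeta> powr (\<gamma> - 1))"
    using MVT2[of "real M" "real (Suc M)" "\<lambda>t. t powr \<gamma>" "\<lambda>t. \<gamma> * t powr (\<gamma> - 1)"] step.hyps assms(3)
    by (force intro!: has_real_derivative_powr)
  have "real (Suc M) powr (\<gamma> - 1) \<le> \<zeta> powr (\<gamma> - 1)"
    using \<zeta> assms step.hyps by (intro powr_mono2') auto
  also have "\<dots> = (real (Suc M) powr \<gamma> - real M powr \<gamma>) / \<gamma>" using \<zeta>(3) assms(2) by simp
  moreover have "{N<..Suc M} = insert (Suc M) {N<..M}" using step.hyps by auto
  ultimately show ?case using step.IH by (simp add: diff_divide_distrib)
qed simp

definition power_sum_defect :: "real \<Rightarrow> nat \<Rightarrow> real" where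
  "power_sum_defect \<gamma> n = (\<Sum>m=1..n. real m powr \<gamma>) - Mfun \<gamma> (real n)"

lemma power_sum_defect_step:
  assumes "2 \<le> n"
  shows "\<bar>power_sum_defect \<gamma> n - power_sum_defect \<gamma> (n - 1)\<bar> \<le> \<bar>\<gamma>\<bar> * 2 powr \<bar>\<gamma> - 1\<bar> * real n powr (\<gamma> - 1)"
proof -
  have "{1..n} = insert n {1..n-1}" using assms by auto
  hence "power_sum_defect \<gamma> n - power_sum_defect \<gamma> (n - 1) =
      real n powr \<gamma> - (Mfun \<gamma> (real n) - Mfun \<gamma> (real n - 1))"
    using assms by (simp add: power_sum_defect_def of_nat_diff)
  moreover obtain \<xi> where \<xi>: "real n - 1 < \<xi>" "\<xi> < real n"
    "Mfun \<gamma> (real n) - Mfun \<gamma> (real n - 1) = (real n - (real n - 1)) * \<xi> powr \<gamma>"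
    using MVT2[of "real n - 1" "real n" "Mfun \<gamma>" "\<lambda>t. t powr \<gamma>"] assms Mfun_has_real_derivative by force
  moreover obtain \<eta> where \<eta>: "\<xi> < \<eta>" "\<eta> < real n"
    "real n powr \<gamma> - \<xi> powr \<gamma> = (real n - \<xi>) * (\<gamma> * \<eta> powr (\<gamma> - 1))"
    using MVT2[of \<xi> "real n" "\<lambda>t. t powr \<gamma>" "\<lambda>t. \<gamma> * t powr (\<gamma> - 1)"] \<xi> assms
    by (force intro!: has_real_derivative_powr)
  ultimately have "\<bar>power_sum_defect \<gamma> n - power_sum_defect \<gamma> (n - 1)\<bar> = (real n - \<xi>) * \<bar>\<gamma>\<bar> * \<eta> powr (\<gamma> - 1)"
    by (simp add: abs_mult)
  also have "\<dots> \<le> \<bar>\<gamma>\<bar> * \<eta> powr (\<gamma> - 1)"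
    using \<xi> mult_right_mono[of "real n - \<xi>" 1 "\<bar>\<gamma>\<bar> * \<eta> powr (\<gamma> - 1)"] by (simp add: mult.assoc)
  also have "\<dots> \<le> \<bar>\<gamma>\<bar> * (2 powr \<bar>\<gamma> - 1\<bar> * real n powr (\<gamma> - 1))"
    using \<xi> \<eta> assms by (intro mult_left_mono powr_le_two_powr_abs_mult) auto
  finally show ?thesis by (simp add: mult_ac)
qed

lemma power_sum_defect_diff:
  assumes "1 \<le> N" "N \<le> M"
  shows "\<bar>power_sum_defect \<gamma> M - power_sum_defect \<gamma> N\<bar>
    \<le> \<bar>\<gamma>\<bar> * 2 powr \<bar>\<gamma> - 1\<bar> * (\<Sum>n\<in>{N<..M}. real n powr (\<gamma> - 1))"
  using assms(2)
proof (induction M rule: dec_induct)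
  case (step M)
  have "\<bar>power_sum_defect \<gamma> (Suc M) - power_sum_defect \<gamma> M\<bar> \<le> \<bar>\<gamma>\<bar> * 2 powr \<bar>\<gamma> - 1\<bar> * real (Suc M) powr (\<gamma> - 1)"
    using power_sum_defect_step[of "Suc M" \<gamma>] step.hyps assms(1) by simp
  moreover have "{N<..Suc M} = insert (Suc M) {N<..M}" using step.hyps by auto
  ultimately show ?case using step.IH by (simp add: distrib_left) linarith
qed simp

text \<open>The limit \<open>c\<close> is \<open>\<zeta>(-\<gamma>)\<close>, or Euler's constant if \<open>\<gamma> = -1\<close>.\<close>

lemma power_sum_defect_converges:
  assumes "\<gamma> < 0"
  obtains c where "\<And>N. 1 \<le> N \<Longrightarrow> \<bar>power_sum_defect \<gamma> N - c\<bar> \<le> 2 powr \<bar>\<gamma> - 1\<bar> * real N powr \<gamma>"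
proof -
  define C where "C = 2 powr \<bar>\<gamma> - 1\<bar>"
  have "\<bar>power_sum_defect \<gamma> M - power_sum_defect \<gamma> N\<bar> \<le> C * real N powr \<gamma>" if "1 \<le> N" "N \<le> M" for N M
  proof -
    have "\<bar>power_sum_defect \<gamma> M - power_sum_defect \<gamma> N\<bar>
        \<le> \<bar>\<gamma>\<bar> * 2 powr \<bar>\<gamma> - 1\<bar> * ((real M powr \<gamma> - real N powr \<gamma>) / \<gamma>)"
      using assms that
      by (intro order.trans[OF power_sum_defect_diff] mult_left_mono sum_powr_le_integral
          mult_nonneg_nonneg abs_ge_zero powr_ge_zero) auto
    also have "\<dots> \<le> \<bar>\<gamma>\<bar> * 2 powr \<bar>\<gamma> - 1\<bar> * (real N powr \<gamma> / (- \<gamma>))"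
      using assms by (intro mult_left_mono mult_nonneg_nonneg abs_ge_zero powr_ge_zero)
        (auto simp: divide_simps)
    also have "\<dots> = C * real N powr \<gamma>" unfolding C_def using assms by (simp add: abs_of_neg)
    finally show ?thesis .
  qed
  moreover have "(\<lambda>N. C * real N powr \<gamma>) \<longlonglongrightarrow> 0"
    using assms by (intro tendsto_mult_right_zero) real_asymp
  ultimately show ?thesis
    using convergent_with_rate[of 1 "power_sum_defect \<gamma>" "\<lambda>N. C * real N powr \<gamma>"] that
    unfolding C_def by blast
qed

lemma sum_powr_minus_one_le:
  assumes "0 \<le> \<gamma>" "1 \<le> N"
  shows "\<bar>\<gamma>\<bar> * (\<Sum>n\<in>{1<..N}. real n powr (\<gamma> - 1)) \<le> (\<bar>\<gamma>\<bar> + 1) * real N powr \<gamma>"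
proof -
  have N1: "1 \<le> real N powr \<gamma>" using assms by (simp add: ge_one_powr_ge_zero)
  consider "1 \<le> \<gamma>" | "\<gamma> = 0" | "0 < \<gamma>" "\<gamma> < 1" using assms(1) by linarith
  thus ?thesis
  proof cases
    case 1
    have "(\<Sum>n\<in>{1<..N}. real n powr (\<gamma> - 1)) \<le> (\<Sum>n\<in>{1<..N}. real N powr (\<gamma> - 1))"
      using 1 by (intro sum_mono powr_mono2) auto
    also have "\<dots> \<le> real N * real N powr (\<gamma> - 1)" by (simp add: mult_right_mono)
    also have "\<dots> = real N powr \<gamma>" using assms by (simp add: powr_diff)
    finally have "\<bar>\<gamma>\<bar> * (\<Sum>n\<in>{1<..N}. real n powr (\<gamma> - 1)) \<le> \<bar>\<gamma>\<bar> * real N powr \<gamma>"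
      by (rule mult_left_mono) simp
    thus ?thesis using N1 by (simp add: distrib_right)
  next
    case 3
    have "\<gamma> * (\<Sum>n\<in>{1<..N}. real n powr (\<gamma> - 1)) \<le> real N powr \<gamma> - 1"
      using sum_powr_le_integral[of \<gamma> 1 N] 3 assms by (simp add: divide_simps mult.commute)
    moreover have "0 \<le> \<gamma> * real N powr \<gamma>" using 3 by simp
    ultimately show ?thesis using N1 unfolding abs_of_pos[OF 3(1)] distrib_right by linarith
  qed simp
qed

lemma power_sum_defect_le:
  assumes "0 \<le> \<gamma>"
  obtains A where "\<And>N. 1 \<le> N \<Longrightarrow> \<bar>power_sum_defect \<gamma> N\<bar> \<le> A * real N powr \<gamma>"
proof -
  define A where "A = \<bar>power_sum_defect \<gamma> 1\<bar> + (\<bar>\<gamma>\<bar> + 1) * 2 powr \<bar>\<gamma> - 1\<bar>"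
  have "\<bar>power_sum_defect \<gamma> N\<bar> \<le> A * real N powr \<gamma>" if N: "1 \<le> N" for N
  proof -
    have "\<bar>power_sum_defect \<gamma> N - power_sum_defect \<gamma> 1\<bar>
        \<le> 2 powr \<bar>\<gamma> - 1\<bar> * (\<bar>\<gamma>\<bar> * (\<Sum>n\<in>{1<..N}. real n powr (\<gamma> - 1)))"
      using power_sum_defect_diff[OF order.refl N, of \<gamma>] by (simp add: mult_ac)
    also have "\<dots> \<le> 2 powr \<bar>\<gamma> - 1\<bar> * ((\<bar>\<gamma>\<bar> + 1) * real N powr \<gamma>)"
      using assms N by (intro mult_left_mono sum_powr_minus_one_le) auto
    finally have "\<bar>power_sum_defect \<gamma> N - power_sum_defect \<gamma> 1\<bar>
        \<le> (\<bar>\<gamma>\<bar> + 1) * 2 powr \<bar>\<gamma> - 1\<bar> * real N powr \<gamma>"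
      by (simp add: mult_ac)
    moreover have "\<bar>power_sum_defect \<gamma> 1\<bar> \<le> \<bar>power_sum_defect \<gamma> 1\<bar> * real N powr \<gamma>"
      using assms N by (simp add: mult_le_cancel_left1 ge_one_powr_ge_zero)
    ultimately show ?thesis unfolding A_def distrib_right by linarith
  qed
  thus ?thesis by (rule that)
qed

lemma power_sum_defect_bound:
  obtains c A where "0 \<le> A" "0 \<le> \<gamma> \<Longrightarrow> c = 0"
    "\<And>N. 1 \<le> N \<Longrightarrow> \<bar>power_sum_defect \<gamma> N - c\<bar> \<le> A * real N powr \<gamma>"
proof (cases "\<gamma> < 0")
  case True
  obtain c where "\<And>N. 1 \<le> N \<Longrightarrow> \<bar>power_sum_defect \<gamma> N - c\<bar> \<le> 2 powr \<bar>\<gamma> - 1\<bar> * real N powr \<gamma>"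
    using power_sum_defect_converges[OF True] by blast
  thus ?thesis using that[of "2 powr \<bar>\<gamma> - 1\<bar>" c] True by simp
next
  case False
  obtain A where A: "\<And>N. 1 \<le> N \<Longrightarrow> \<bar>power_sum_defect \<gamma> N\<bar> \<le> A * real N powr \<gamma>"
    using power_sum_defect_le[of \<gamma>] False by force
  hence "\<bar>power_sum_defect \<gamma> N - 0\<bar> \<le> \<bar>A\<bar> * real N powr \<gamma>" if "1 \<le> N" for N
    using A[OF that] abs_ge_self[of A] by (smt (verit) mult_right_mono powr_ge_zero)
  thus ?thesis using that[of "\<bar>A\<bar>" 0] by simp
qed

lemma Mfun_minus_Mfun_floor_le:
  assumes y: "1 \<le> y"
  shows "\<bar>Mfun \<gamma> y - Mfun \<gamma> (real (nat \<lfloor>y\<rfloor>))\<bar> \<le> 2 powr \<bar>\<gamma>\<bar> * y powr \<gamma>"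
proof -
  define N where "N = nat \<lfloor>y\<rfloor>"
  have N0: "1 \<le> N" "real N \<le> y" "y < real N + 1" using y unfolding N_def by linarith+
  hence N: "1 \<le> N" "real N \<le> y" "y / 2 \<le> real N" by linarith+
  show ?thesis
  proof (cases "real N = y")
    case False
    hence lt: "real N < y" using N by simp
    obtain \<xi> where \<xi>: "real N < \<xi>" "\<xi> < y" "Mfun \<gamma> y - Mfun \<gamma> (real N) = (y - real N) * \<xi> powr \<gamma>"
      using MVT2[of "real N" y "Mfun \<gamma>" "\<lambda>t. t powr \<gamma>"] lt N Mfun_has_real_derivative by force
    have "\<bar>Mfun \<gamma> y - Mfun \<gamma> (real N)\<bar> = (y - real N) * \<xi> powr \<gamma>" using \<xi> lt by simp
    also have "\<dots> \<le> 1 * \<xi> powr \<gamma>" using N0 by (intro mult_right_mono) auto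
    also have "\<dots> \<le> 2 powr \<bar>\<gamma>\<bar> * y powr \<gamma>" using \<xi> N by (simp add: powr_le_two_powr_abs_mult)
    finally show ?thesis unfolding N_def .
  qed (simp add: N_def)
qed

lemma power_sum_asymp:
  obtains c A where "0 \<le> A" "0 \<le> \<gamma> \<Longrightarrow> c = 0"
    "\<And>y. 1 \<le> y \<Longrightarrow> \<bar>(\<Sum>m=1..nat \<lfloor>y\<rfloor>. real m powr \<gamma>) - Mfun \<gamma> y - c\<bar> \<le> A * y powr \<gamma>"
proof -
  obtain c A where A: "0 \<le> A" and c: "0 \<le> \<gamma> \<Longrightarrow> c = 0"
    and defect: "\<And>N. 1 \<le> N \<Longrightarrow> \<bar>power_sum_defect \<gamma> N - c\<bar> \<le> A * real N powr \<gamma>"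
    using power_sum_defect_bound[where \<gamma> = \<gamma>] by metis
  have "\<bar>(\<Sum>m=1..nat \<lfloor>y\<rfloor>. real m powr \<gamma>) - Mfun \<gamma> y - c\<bar> \<le> (A + 1) * 2 powr \<bar>\<gamma>\<bar> * y powr \<gamma>"
    if y: "1 \<le> y" for y
  proof -
    define N where "N = nat \<lfloor>y\<rfloor>"
    have "1 \<le> N" "real N \<le> y" "y < real N + 1" using y unfolding N_def by linarith+
    hence N: "1 \<le> N" "real N \<le> y" "y / 2 \<le> real N" by linarith+
    have "\<bar>power_sum_defect \<gamma> N - c\<bar> \<le> A * real N powr \<gamma>" using defect[OF N(1)] .
    also have "\<dots> \<le> A * (2 powr \<bar>\<gamma>\<bar> * y powr \<gamma>)"
      using N A by (intro mult_left_mono powr_le_two_powr_abs_mult) auto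
    finally have "\<bar>power_sum_defect \<gamma> N - c\<bar> \<le> A * (2 powr \<bar>\<gamma>\<bar> * y powr \<gamma>)" .
    moreover have "(\<Sum>m=1..N. real m powr \<gamma>) - Mfun \<gamma> y - c =
        (power_sum_defect \<gamma> N - c) - (Mfun \<gamma> y - Mfun \<gamma> (real N))"
      unfolding power_sum_defect_def by simp
    ultimately show ?thesis
      using Mfun_minus_Mfun_floor_le[OF y, of \<gamma>] unfolding N_def by (simp add: algebra_simps) linarith
  qed
  moreover have "0 \<le> (A + 1) * 2 powr \<bar>\<gamma>\<bar>" using A by simp
  ultimately show ?thesis using that[where c = c] c by blast
qed

section \<open>Dyadic decomposition of tails\<close>

lemma summable_poly_times_geometric:
  assumes q: "0 \<le> q" "q < (1::real)"
  shows "summable (\<lambda>k. real (k+2) ^ a * q ^ k)"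
proof -
  define c where "c = (1 + q) / 2"
  have c: "c < 1" "q < c" using q unfolding c_def by auto
  have lim: "(\<lambda>n. q * ((real n + 3) / (real n + 2)) ^ a) \<longlonglongrightarrow> q * 1 ^ a"
  proof (intro tendsto_mult tendsto_const tendsto_power)
    show "(\<lambda>n. (real n + 3) / (real n + 2)) \<longlonglongrightarrow> 1" by real_asymp
  qed
  have "eventually (\<lambda>n. q * ((real n + 3) / (real n + 2)) ^ a < c) sequentially"
    using order_tendstoD(2)[OF lim] c by simp
  then obtain N where N: "\<And>n. n \<ge> N \<Longrightarrow> q * ((real n + 3) / (real n + 2)) ^ a < c"
    unfolding eventually_sequentially by blast
  show ?thesis
  proof (rule summable_ratio_test[OF c(1), of N])
    fix n assume n: "n \<ge> N"
    have pos: "real n + 2 > 0" by simp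
    have "norm (real (Suc n + 2) ^ a * q ^ Suc n) = q * ((real n + 3) / (real n + 2)) ^ a * (real (n + 2) ^ a * q ^ n)"
      using pos q by (simp add: power_divide field_simps)
    also have "\<dots> \<le> c * (real (n + 2) ^ a * q ^ n)"
      using N[OF n] q by (intro mult_right_mono) auto
    also have "\<dots> = c * norm (real (n + 2) ^ a * q ^ n)" using q by simp
    finally show "norm (real (Suc n + 2) ^ a * q ^ Suc n) \<le> c * norm (real (n + 2) ^ a * q ^ n)" .
  qed
qed

lemma dyadic_block_exists:
  fixes x t :: real
  assumes "0 < x" "x < t"
  shows "\<exists>k. 2^k * x < t \<and> t \<le> 2^(k+1) * x"
proof -
  obtain n where n: "t / x < 2 ^ n" using real_arch_pow[of 2 "t / x"] by auto
  have ex: "\<exists>k. t \<le> 2^(k+1) * x"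
    using n assms by (intro exI[of _ n]) (simp add: divide_less_eq)
  define k where "k = (LEAST k. t \<le> 2^(k+1) * x)"
  have "t \<le> 2^(k+1) * x" unfolding k_def by (rule LeastI_ex[OF ex])
  moreover have "2^k * x < t"
  proof (cases k)
    case (Suc j)
    hence "\<not> t \<le> 2^(j+1) * x" using not_less_Least[of j "\<lambda>k. t \<le> 2^(k+1) * x"] unfolding k_def by simp
    thus ?thesis using Suc by simp
  qed (use assms in simp)
  ultimately show ?thesis by blast
qed

lemma ln_two_pow_mult_le:
  assumes "2 \<le> x"
  shows "ln (2^(k+1) * x) \<le> real (k+2) * ln x"
proof -
  have "ln (2^(k+1) * x) = real (k+1) * ln 2 + ln x"
    using assms by (simp add: ln_mult ln_realpow algebra_simps)
  also have "\<dots> \<le> real (k+1) * ln x + ln x"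
    using assms by (intro add_right_mono mult_left_mono) auto
  finally show ?thesis by (simp add: algebra_simps)
qed

lemma prod_gt_of_notin_prime_sets:
  assumes "P \<in> prime_sets M - prime_sets (nat \<lfloor>x\<rfloor>)" "0 \<le> x"
  shows "x < real (\<Prod>P)"
proof -
  have "\<not> \<Prod>P \<le> nat \<lfloor>x\<rfloor>" using assms(1) by (auto simp: prime_sets_iff)
  thus ?thesis using assms(2) by linarith
qed

lemma mem_prime_sets_floor_bounds:
  assumes "P \<in> prime_sets (nat \<lfloor>x\<rfloor>)"
  shows "1 \<le> real (\<Prod>P)" "real (\<Prod>P) \<le> x"
proof -
  have "0 < \<Prod>P" "\<Prod>P \<le> nat \<lfloor>x\<rfloor>" using assms prod_primes_pos[of P] by (auto simp: prime_sets_iff)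
  thus "1 \<le> real (\<Prod>P)" "real (\<Prod>P) \<le> x" by linarith+
qed

lemma nat_floor_divide_eq:
  assumes "0 \<le> x" "0 < d"
  shows "nat \<lfloor>x / real d\<rfloor> = nat \<lfloor>x\<rfloor> div d"
proof -
  have "\<lfloor>x / real d\<rfloor> = \<lfloor>x\<rfloor> div int d" using floor_divide_real_eq_div[of "int d" x] by simp
  thus ?thesis using assms by (simp add: nat_div_distrib)
qed

lemma ln_le_two_sqrt:
  fixes t :: real
  assumes t: "0 < t"
  shows "ln t \<le> 2 * sqrt t"
proof -
  have "ln (sqrt t) \<le> sqrt t - 1" using t by (intro ln_le_minus_one) simp
  moreover have "ln (sqrt t) = ln t / 2" using t by (simp add: ln_sqrt)
  ultimately show ?thesis by simp
qed

lemma recip_le_dyadic: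
  assumes x: "2 \<le> x" "2^k * x < real d"
  shows "\<bar>1 / real d\<bar> \<le> (1 / x) * (1/2)^k"
proof -
  have pos: "0 < 2^k * x" using x by simp
  have le: "2^k * x \<le> real d" using x by simp
  have "1 / real d \<le> 1 / (2^k * x)" by (rule frac_le[OF _ _ pos le]) auto
  moreover have "(1 / x) * (1/2)^k = 1 / (2^k * x)" by (simp add: power_one_over)
  moreover have "0 \<le> 1 / real d" by simp
  ultimately show ?thesis by simp
qed

lemma powr_le_dyadic:
  assumes g: "\<gamma> < 0" and x: "2 \<le> x" "2^k * x < real d"
  shows "\<bar>real d powr \<gamma>\<bar> \<le> x powr \<gamma> * (2 powr \<gamma>)^k"
proof -
  have pos: "0 < 2^k * x" using x by simp
  have "real d powr \<gamma> \<le> (2^k * x) powr \<gamma>" using pos x g by (intro powr_mono2') auto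
  also have "\<dots> = (2^k) powr \<gamma> * x powr \<gamma>" by (rule powr_mult)
  also have "(2::real)^k = 2 powr real k" by (simp add: powr_realpow)
  also have "(2 powr real k) powr \<gamma> = (2 powr \<gamma>)^k" by (simp add: powr_powr powr_power mult.commute)
  finally show ?thesis by (simp add: mult.commute)
qed

lemma ln_div_le_dyadic:
  assumes x: "2 \<le> x" "2^k * x < real d"
  shows "\<bar>ln (real d) / real d\<bar> \<le> (2 / sqrt x) * (1 / sqrt 2)^k"
proof -
  have pos: "0 < 2^k * x" using x by simp
  have "1 * x \<le> 2^k * x" using x by (intro mult_right_mono) auto
  hence d: "real d > 2" using x by linarith
  have lnd: "0 \<le> ln (real d)" using d by simp
  have "\<bar>ln (real d) / real d\<bar> = ln (real d) / real d" using lnd d by simp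
  also have "\<dots> \<le> 2 * sqrt (real d) / real d" using d ln_le_two_sqrt[of "real d"] by (intro divide_right_mono) auto
  also have "\<dots> = 2 / sqrt (real d)" using d by (simp add: field_simps real_sqrt_mult[symmetric])
  also have "\<dots> \<le> 2 / sqrt (2^k * x)" using pos x d by (intro divide_left_mono real_sqrt_le_mono mult_pos_pos) auto
  also have "\<dots> = (2 / sqrt x) * (1 / sqrt 2)^k" using x
    by (simp add: real_sqrt_mult real_sqrt_power power_one_over field_simps)
  finally show ?thesis .
qed

lemma ln_ratio_div_le_dyadic:
  assumes x: "2 \<le> x" "2^k * x < real d"
  shows "\<bar>ln (real d / x) / real d\<bar> \<le> (2 / x) * (1 / sqrt 2)^k"
proof -
  have pos: "0 < 2^k * x" using x by simp
  have k1: "(1::real) \<le> 2^k" by simp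
  have "1 * x \<le> 2^k * x" using x k1 by (intro mult_right_mono) auto
  hence dgt: "real d > x" using x by linarith
  hence dx: "real d / x > 1" using x by (simp add: field_simps)
  have d: "real d > 0" using dgt x by linarith
  have lnd: "0 \<le> ln (real d / x)" using dx by simp
  have "\<bar>ln (real d / x) / real d\<bar> = ln (real d / x) / real d" using lnd d by simp
  also have "\<dots> \<le> 2 * sqrt (real d / x) / real d" using d dx ln_le_two_sqrt[of "real d / x"] by (intro divide_right_mono) auto
  also have "\<dots> = 2 * (sqrt (real d) / sqrt x) / (sqrt (real d) * sqrt (real d))"
    using d by (simp add: real_sqrt_divide)
  also have "\<dots> = 2 / (sqrt (real d) * sqrt x)" using d x by (simp add: field_simps)
  also have "\<dots> \<le> 2 / (sqrt (2^k * x) * sqrt x)" using pos x d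
    by (intro divide_left_mono mult_right_mono real_sqrt_le_mono mult_pos_pos) auto
  also have "\<dots> = (2 / x) * (1 / sqrt 2)^k" using x
    by (simp add: real_sqrt_mult real_sqrt_power power_one_over field_simps)
  finally show ?thesis .
qed

section \<open>Sums over squarefree numbers with log-bounded weights\<close>

locale log_bounded_weights =
  fixes g :: "nat set \<Rightarrow> real" and a :: nat and K :: real
  assumes K_nonneg: "0 \<le> K"
    and sum_abs_le: "\<And>y. 2 \<le> y \<Longrightarrow> (\<Sum>P\<in>prime_sets (nat \<lfloor>y\<rfloor>). \<bar>g P\<bar>) \<le> K * ln y ^ a"
begin

definition weighted_sum :: "(nat \<Rightarrow> real) \<Rightarrow> nat \<Rightarrow> real" where
  "weighted_sum \<rho> N = (\<Sum>P\<in>prime_sets N. g P * \<rho> (\<Prod>P))"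

definition recip_series :: real where
  "recip_series = lim (weighted_sum (\<lambda>d. 1 / real d))"

lemma sum_abs_le_dyadic_block:
  assumes x: "2 \<le> x" and sub: "\<Q> \<subseteq> prime_sets M"
    and le: "\<And>P. P \<in> \<Q> \<Longrightarrow> real (\<Prod>P) \<le> 2^(k+1) * x"
  shows "(\<Sum>P\<in>\<Q>. \<bar>g P\<bar>) \<le> K * ln x ^ a * real (k+2) ^ a"
proof -
  define y where "y = 2^(k+1) * x"
  have "1 * x \<le> 2^(k+1) * x" using x by (intro mult_right_mono one_le_power) auto
  hence y: "2 \<le> y" using x unfolding y_def by linarith
  have "\<Q> \<subseteq> prime_sets (nat \<lfloor>y\<rfloor>)"
  proof
    fix P assume P: "P \<in> \<Q>"
    hence "\<Prod>P \<le> nat \<lfloor>y\<rfloor>" using le[of P] unfolding y_def by (simp add: le_nat_floor)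
    thus "P \<in> prime_sets (nat \<lfloor>y\<rfloor>)" using P sub by (auto simp: prime_sets_iff)
  qed
  hence "(\<Sum>P\<in>\<Q>. \<bar>g P\<bar>) \<le> (\<Sum>P\<in>prime_sets (nat \<lfloor>y\<rfloor>). \<bar>g P\<bar>)"
    by (intro sum_mono2 finite_prime_sets) auto
  also have "\<dots> \<le> K * ln y ^ a" by (rule sum_abs_le[OF y])
  also have "\<dots> \<le> K * (real (k+2) * ln x) ^ a"
    using y x unfolding y_def by (intro mult_left_mono power_mono ln_two_pow_mult_le K_nonneg) auto
  finally show ?thesis by (simp add: power_mult_distrib mult_ac)
qed

text \<open>Sort the \<open>P\<close> by the dyadic block \<open>2^k x < \<Prod>P \<le> 2^(k+1) x\<close> containing \<open>\<Prod>P\<close>: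
  block \<open>k\<close> carries weight at most \<open>K ((k+2) ln x)^a\<close>, while \<open>\<rho>\<close> decays like \<open>q^k\<close>.\<close>

lemma dyadic_tail_le:
  fixes \<rho> :: "nat \<Rightarrow> real"
  assumes x: "2 \<le> x" and q: "0 \<le> q" "q < 1" and Q: "0 \<le> Q"
    and block: "\<And>k d. 2^k * x < real d \<Longrightarrow> real d \<le> 2^(k+1) * x \<Longrightarrow> \<bar>\<rho> d\<bar> \<le> Q * q^k"
    and sub: "\<P> \<subseteq> prime_sets M - prime_sets (nat \<lfloor>x\<rfloor>)"
  shows "(\<Sum>P\<in>\<P>. \<bar>g P\<bar> * \<bar>\<rho> (\<Prod>P)\<bar>) \<le> K * Q * ln x ^ a * (\<Sum>k. real (k+2) ^ a * q ^ k)"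
proof -
  define h where "h k = real (k+2) ^ a * q ^ k" for k
  have fin: "finite \<P>" using sub finite_prime_sets by (meson Diff_subset finite_subset)
  have "\<forall>P\<in>\<P>. \<exists>k. 2^k * x < real (\<Prod>P) \<and> real (\<Prod>P) \<le> 2^(k+1) * x"
    using sub x by (intro ballI dyadic_block_exists prod_gt_of_notin_prime_sets) auto
  then obtain \<kappa> where \<kappa>: "\<And>P. P \<in> \<P> \<Longrightarrow> 2^\<kappa> P * x < real (\<Prod>P) \<and> real (\<Prod>P) \<le> 2^(\<kappa> P + 1) * x"
    by metis
  have block_sum: "(\<Sum>P | P \<in> \<P> \<and> \<kappa> P = k. \<bar>g P\<bar>) \<le> K * ln x ^ a * real (k+2) ^ a" for k
    using x sub \<kappa> by (intro sum_abs_le_dyadic_block[where M = M]) auto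
  have "(\<Sum>P\<in>\<P>. \<bar>g P\<bar> * \<bar>\<rho> (\<Prod>P)\<bar>) \<le> (\<Sum>P\<in>\<P>. \<bar>g P\<bar> * (Q * q ^ \<kappa> P))"
    using \<kappa> block by (intro sum_mono mult_left_mono) auto
  also have "\<dots> = (\<Sum>k\<in>\<kappa> ` \<P>. \<Sum>P | P \<in> \<P> \<and> \<kappa> P = k. \<bar>g P\<bar> * (Q * q ^ \<kappa> P))"
    by (rule sum.image_gen[OF fin])
  also have "\<dots> = (\<Sum>k\<in>\<kappa> ` \<P>. Q * q ^ k * (\<Sum>P | P \<in> \<P> \<and> \<kappa> P = k. \<bar>g P\<bar>))"
    unfolding sum_distrib_left by (intro sum.cong refl) (simp add: mult_ac)
  also have "\<dots> \<le> (\<Sum>k\<in>\<kappa> ` \<P>. K * Q * ln x ^ a * h k)"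
  proof (intro sum_mono)
    fix k
    have "Q * q ^ k * (\<Sum>P | P \<in> \<P> \<and> \<kappa> P = k. \<bar>g P\<bar>) \<le> Q * q ^ k * (K * ln x ^ a * real (k+2) ^ a)"
      using Q q by (intro mult_left_mono block_sum) auto
    thus "Q * q ^ k * (\<Sum>P | P \<in> \<P> \<and> \<kappa> P = k. \<bar>g P\<bar>) \<le> K * Q * ln x ^ a * h k"
      by (simp add: h_def mult_ac)
  qed
  also have "\<dots> \<le> K * Q * ln x ^ a * (\<Sum>k. h k)"
    unfolding sum_distrib_left[symmetric]
  proof (intro mult_left_mono sum_le_suminf)
    show "summable h" unfolding h_def by (rule summable_poly_times_geometric[OF q])
    show "0 \<le> K * Q * ln x ^ a" using K_nonneg Q x by simp
  qed (use fin q in \<open>auto simp: h_def\<close>)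
  finally show ?thesis unfolding h_def .
qed

lemma weighted_sum_tail_le:
  fixes \<rho> :: "nat \<Rightarrow> real"
  assumes "2 \<le> x" "0 \<le> q" "q < 1" "0 \<le> Q" "nat \<lfloor>x\<rfloor> \<le> M"
    and "\<And>k d. 2^k * x < real d \<Longrightarrow> \<bar>\<rho> d\<bar> \<le> Q * q^k"
  shows "\<bar>weighted_sum \<rho> M - weighted_sum \<rho> (nat \<lfloor>x\<rfloor>)\<bar> \<le> K * Q * ln x ^ a * (\<Sum>k. real (k+2) ^ a * q ^ k)"
proof -
  have "weighted_sum \<rho> M = (\<Sum>P\<in>prime_sets M - prime_sets (nat \<lfloor>x\<rfloor>). g P * \<rho> (\<Prod>P))
      + weighted_sum \<rho> (nat \<lfloor>x\<rfloor>)"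
    unfolding weighted_sum_def using assms(5)
    by (intro sum.subset_diff prime_sets_mono finite_prime_sets)
  hence "\<bar>weighted_sum \<rho> M - weighted_sum \<rho> (nat \<lfloor>x\<rfloor>)\<bar>
      \<le> (\<Sum>P\<in>prime_sets M - prime_sets (nat \<lfloor>x\<rfloor>). \<bar>g P\<bar> * \<bar>\<rho> (\<Prod>P)\<bar>)"
    using sum_abs[of "\<lambda>P. g P * \<rho> (\<Prod>P)"] by (simp add: abs_mult)
  also have "\<dots> \<le> K * Q * ln x ^ a * (\<Sum>k. real (k+2) ^ a * q ^ k)"
    using assms by (intro dyadic_tail_le) auto
  finally show ?thesis .
qed

lemma weighted_sum_converges:
  fixes \<rho> :: "nat \<Rightarrow> real"
  assumes q: "0 \<le> q" "q < 1" and Q: "\<And>x. 2 \<le> x \<Longrightarrow> 0 \<le> Q x"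
    and block: "\<And>x k d. 2 \<le> x \<Longrightarrow> 2^k * x < real d \<Longrightarrow> \<bar>\<rho> d\<bar> \<le> Q x * q^k"
    and decay: "(\<lambda>N. Q (real N) * ln (real N) ^ a) \<longlonglongrightarrow> 0"
  obtains L B where "weighted_sum \<rho> \<longlonglongrightarrow> L"
    "\<And>x. 2 \<le> x \<Longrightarrow> \<bar>weighted_sum \<rho> (nat \<lfloor>x\<rfloor>) - L\<bar> \<le> B * Q x * ln x ^ a"
proof -
  define B where "B = K * (\<Sum>k. real (k+2) ^ a * q ^ k)"
  have tail: "\<bar>weighted_sum \<rho> M - weighted_sum \<rho> (nat \<lfloor>x\<rfloor>)\<bar> \<le> B * Q x * ln x ^ a"
    if "2 \<le> x" "nat \<lfloor>x\<rfloor> \<le> M" for x M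
    using weighted_sum_tail_le[of x q "Q x" M \<rho>] that q Q block by (simp add: B_def mult_ac)
  have "(\<lambda>N. B * (Q (real N) * ln (real N) ^ a)) \<longlonglongrightarrow> 0"
    by (rule tendsto_mult_right_zero[OF decay])
  then obtain L where L: "weighted_sum \<rho> \<longlonglongrightarrow> L"
    using convergent_with_rate[of 2 "weighted_sum \<rho>" "\<lambda>N. B * (Q (real N) * ln (real N) ^ a)"]
      tail[of "real _"] by (auto simp: mult.assoc)
  show ?thesis
  proof (rule that[OF L])
    fix x :: real assume "2 \<le> x"
    thus "\<bar>weighted_sum \<rho> (nat \<lfloor>x\<rfloor>) - L\<bar> \<le> B * Q x * ln x ^ a"
      by (intro LIMSEQ_dist_le[OF L] tail)
  qed
qed

lemma weighted_sum_recip_asymp: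
  obtains B where "weighted_sum (\<lambda>d. 1 / real d) \<longlonglongrightarrow> recip_series"
    "\<And>x. 2 \<le> x \<Longrightarrow> \<bar>weighted_sum (\<lambda>d. 1 / real d) (nat \<lfloor>x\<rfloor>) - recip_series\<bar> \<le> B * (1 / x) * ln x ^ a"
proof -
  obtain L B where L: "weighted_sum (\<lambda>d. 1 / real d) \<longlonglongrightarrow> L"
    and B: "\<And>x. 2 \<le> x \<Longrightarrow> \<bar>weighted_sum (\<lambda>d. 1 / real d) (nat \<lfloor>x\<rfloor>) - L\<bar> \<le> B * (1 / x) * ln x ^ a"
  proof (rule weighted_sum_converges[of "1/2" "\<lambda>x. 1 / x"])
    show "\<And>x k d. 2 \<le> x \<Longrightarrow> 2^k * x < real d \<Longrightarrow> \<bar>1 / real d\<bar> \<le> 1 / x * (1/2)^k"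
      by (rule recip_le_dyadic)
    show "(\<lambda>N. 1 / real N * ln (real N) ^ a) \<longlonglongrightarrow> 0" by real_asymp
  qed auto
  moreover have "recip_series = L" unfolding recip_series_def using L by (rule limI)
  ultimately show ?thesis using that by blast
qed

lemma convergent_weighted_sum_ln_div: "convergent (weighted_sum (\<lambda>d. ln (real d) / real d))"
proof -
  obtain L B where "weighted_sum (\<lambda>d. ln (real d) / real d) \<longlonglongrightarrow> L"
  proof (rule weighted_sum_converges[of "1 / sqrt 2" "\<lambda>x. 2 / sqrt x"])
    show "\<And>x k d. 2 \<le> x \<Longrightarrow> 2^k * x < real d \<Longrightarrow>
        \<bar>ln (real d) / real d\<bar> \<le> 2 / sqrt x * (1 / sqrt 2)^k"
      by (rule ln_div_le_dyadic)
    show "(\<lambda>N. 2 / sqrt (real N) * ln (real N) ^ a) \<longlonglongrightarrow> 0" by real_asymp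
  qed auto
  thus ?thesis by (rule convergentI)
qed

lemma weighted_sum_powr_asymp:
  assumes "\<gamma> < 0"
  obtains L B where
    "\<And>x. 2 \<le> x \<Longrightarrow> \<bar>weighted_sum (\<lambda>d. real d powr \<gamma>) (nat \<lfloor>x\<rfloor>) - L\<bar> \<le> B * x powr \<gamma> * ln x ^ a"
proof (rule weighted_sum_converges[of "2 powr \<gamma>" "\<lambda>x. x powr \<gamma>"])
  show "\<And>x k d. 2 \<le> x \<Longrightarrow> 2^k * x < real d \<Longrightarrow> \<bar>real d powr \<gamma>\<bar> \<le> x powr \<gamma> * (2 powr \<gamma>)^k"
    by (rule powr_le_dyadic[OF assms])
  show "(\<lambda>N. real N powr \<gamma> * ln (real N) ^ a) \<longlonglongrightarrow> 0" using assms by real_asymp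
qed (use assms in \<open>auto intro: powr_less_one\<close>)

lemma error_term_le:
  assumes E: "\<And>y. 1 \<le> y \<Longrightarrow> \<bar>E y\<bar> \<le> A * y powr \<gamma>" and A: "0 \<le> A" and x: "2 \<le> x"
  shows "\<bar>\<Sum>P\<in>prime_sets (nat \<lfloor>x\<rfloor>). g P * (real (\<Prod>P) powr \<gamma> * E (x / real (\<Prod>P)))\<bar>
    \<le> A * K * x powr \<gamma> * ln x ^ a"
proof -
  have term_le: "\<bar>g P * (real (\<Prod>P) powr \<gamma> * E (x / real (\<Prod>P)))\<bar> \<le> \<bar>g P\<bar> * (A * x powr \<gamma>)"
    if P: "P \<in> prime_sets (nat \<lfloor>x\<rfloor>)" for P
  proof -
    note d = mem_prime_sets_floor_bounds[OF P]
    have "real (\<Prod>P) powr \<gamma> * \<bar>E (x / real (\<Prod>P))\<bar> \<le> real (\<Prod>P) powr \<gamma> * (A * (x / real (\<Prod>P)) powr \<gamma>)"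
      using d by (intro mult_left_mono E) auto
    also have "\<dots> = A * x powr \<gamma>" using d by (simp add: powr_divide)
    finally show ?thesis by (simp add: abs_mult mult_left_mono)
  qed
  have "\<bar>\<Sum>P\<in>prime_sets (nat \<lfloor>x\<rfloor>). g P * (real (\<Prod>P) powr \<gamma> * E (x / real (\<Prod>P)))\<bar>
      \<le> (\<Sum>P\<in>prime_sets (nat \<lfloor>x\<rfloor>). \<bar>g P\<bar> * (A * x powr \<gamma>))"
    by (rule order.trans[OF sum_abs sum_mono]) (rule term_le)
  also have "\<dots> = A * x powr \<gamma> * (\<Sum>P\<in>prime_sets (nat \<lfloor>x\<rfloor>). \<bar>g P\<bar>)"
    by (simp add: sum_distrib_left mult_ac)
  also have "\<dots> \<le> A * x powr \<gamma> * (K * ln x ^ a)"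
    using A x by (intro mult_left_mono sum_abs_le) auto
  finally show ?thesis by (simp add: mult_ac)
qed

lemma main_term_asymp_powr:
  assumes \<gamma>: "\<gamma> \<noteq> -1"
  obtains B where "\<And>x. 2 \<le> x \<Longrightarrow>
    \<bar>(\<Sum>P\<in>prime_sets (nat \<lfloor>x\<rfloor>). g P * (real (\<Prod>P) powr \<gamma> * Mfun \<gamma> (x / real (\<Prod>P))))
      - recip_series * Mfun \<gamma> x\<bar> \<le> B * x powr \<gamma> * ln x ^ a"
proof -
  obtain B where B: "\<And>x. 2 \<le> x \<Longrightarrow>
      \<bar>weighted_sum (\<lambda>d. 1 / real d) (nat \<lfloor>x\<rfloor>) - recip_series\<bar> \<le> B * (1 / x) * ln x ^ a"
    using weighted_sum_recip_asymp by blast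
  have \<gamma>1: "\<gamma> + 1 \<noteq> 0" using \<gamma> by linarith
  have "\<bar>(\<Sum>P\<in>prime_sets (nat \<lfloor>x\<rfloor>). g P * (real (\<Prod>P) powr \<gamma> * Mfun \<gamma> (x / real (\<Prod>P))))
      - recip_series * Mfun \<gamma> x\<bar> \<le> B / \<bar>\<gamma> + 1\<bar> * x powr \<gamma> * ln x ^ a" if x: "2 \<le> x" for x
  proof -
    have "real (\<Prod>P) powr \<gamma> * Mfun \<gamma> (x / real (\<Prod>P)) = Mfun \<gamma> x * (1 / real (\<Prod>P))"
      if "P \<in> prime_sets (nat \<lfloor>x\<rfloor>)" for P
    proof -
      define d where "d = real (\<Prod>P)"
      have d: "1 \<le> d" using mem_prime_sets_floor_bounds[OF that] unfolding d_def by simp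
      have "d powr \<gamma> / d powr (\<gamma> + 1) = 1 / d" using d by (simp add: powr_add)
      moreover have "d powr \<gamma> * Mfun \<gamma> (x / d) = x powr (\<gamma> + 1) / (\<gamma> + 1) * (d powr \<gamma> / d powr (\<gamma> + 1))"
        unfolding Mfun_def using \<gamma> \<gamma>1 d by (simp add: powr_divide field_simps)
      ultimately show ?thesis unfolding d_def Mfun_def using \<gamma> by simp
    qed
    hence "(\<Sum>P\<in>prime_sets (nat \<lfloor>x\<rfloor>). g P * (real (\<Prod>P) powr \<gamma> * Mfun \<gamma> (x / real (\<Prod>P))))
        = Mfun \<gamma> x * weighted_sum (\<lambda>d. 1 / real d) (nat \<lfloor>x\<rfloor>)"
      unfolding weighted_sum_def sum_distrib_left by (intro sum.cong refl) simp
    hence "\<bar>(\<Sum>P\<in>prime_sets (nat \<lfloor>x\<rfloor>). g P * (real (\<Prod>P) powr \<gamma> * Mfun \<gamma> (x / real (\<Prod>P))))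
        - recip_series * Mfun \<gamma> x\<bar>
        = \<bar>Mfun \<gamma> x\<bar> * \<bar>weighted_sum (\<lambda>d. 1 / real d) (nat \<lfloor>x\<rfloor>) - recip_series\<bar>"
      by (simp add: algebra_simps flip: abs_mult)
    also have "\<dots> \<le> \<bar>Mfun \<gamma> x\<bar> * (B * (1 / x) * ln x ^ a)"
      by (intro mult_left_mono B x) simp
    also have "\<dots> = B / \<bar>\<gamma> + 1\<bar> * x powr \<gamma> * ln x ^ a"
      using \<gamma> \<gamma>1 x by (simp add: Mfun_def abs_divide powr_add field_simps)
    finally show ?thesis .
  qed
  thus ?thesis using that by blast
qed

text \<open>For \<open>\<gamma> = -1\<close> the main term is \<open>-\<Sum> g(d) ln(d/x)/d\<close>; its tail beyond \<open>x\<close> is controlled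
  with the weight \<open>ln(d/x)/d\<close> itself, which is \<open>O(1/x)\<close> on the first dyadic block.\<close>

lemma main_term_asymp_ln:
  obtains C B where "\<And>x. 2 \<le> x \<Longrightarrow>
    \<bar>(\<Sum>P\<in>prime_sets (nat \<lfloor>x\<rfloor>). g P * (real (\<Prod>P) powr -1 * Mfun (-1) (x / real (\<Prod>P))))
      - recip_series * Mfun (-1) x - C\<bar> \<le> B * x powr -1 * ln x ^ a"
proof -
  define S where "S = (\<Sum>k. real (k+2) ^ a * (1 / sqrt 2) ^ k)"
  obtain Lc where Lc: "weighted_sum (\<lambda>d. ln (real d) / real d) \<longlonglongrightarrow> Lc"
    using convergent_weighted_sum_ln_div by (auto simp: convergent_def)
  have G: "weighted_sum (\<lambda>d. 1 / real d) \<longlonglongrightarrow> recip_series"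
    using weighted_sum_recip_asymp by blast
  have "\<bar>(\<Sum>P\<in>prime_sets (nat \<lfloor>x\<rfloor>). g P * (real (\<Prod>P) powr -1 * Mfun (-1) (x / real (\<Prod>P))))
      - recip_series * Mfun (-1) x + Lc\<bar> \<le> 2 * K * S * x powr -1 * ln x ^ a" if x: "2 \<le> x" for x
  proof -
    define \<rho> where "\<rho> d = ln (real d / x) / real d" for d :: nat
    have lin: "weighted_sum \<rho> M = weighted_sum (\<lambda>d. ln (real d) / real d) M - ln x * weighted_sum (\<lambda>d. 1 / real d) M"
      for M
      unfolding weighted_sum_def sum_distrib_left sum_subtractf[symmetric]
    proof (intro sum.cong refl)
      fix P assume "P \<in> prime_sets M"
      hence "0 < \<Prod>P" using prod_primes_pos[of P] by (simp add: prime_sets_iff)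
      hence "0 < real (\<Prod>P)" by (simp only: of_nat_0_less_iff)
      thus "g P * \<rho> (\<Prod>P) = g P * (ln (real (\<Prod>P)) / real (\<Prod>P)) - ln x * (g P * (1 / real (\<Prod>P)))"
        unfolding \<rho>_def using x by (simp add: ln_div field_simps)
    qed
    have "weighted_sum \<rho> \<longlonglongrightarrow> Lc - ln x * recip_series"
      unfolding lin by (intro tendsto_intros Lc G)
    moreover have "\<bar>weighted_sum \<rho> M - weighted_sum \<rho> (nat \<lfloor>x\<rfloor>)\<bar> \<le> K * (2 / x) * ln x ^ a * S"
      if "nat \<lfloor>x\<rfloor> \<le> M" for M
      unfolding S_def \<rho>_def using x that by (intro weighted_sum_tail_le ln_ratio_div_le_dyadic) auto
    ultimately have "\<bar>weighted_sum \<rho> (nat \<lfloor>x\<rfloor>) - (Lc - ln x * recip_series)\<bar> \<le> K * (2 / x) * ln x ^ a * S"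
      by (rule LIMSEQ_dist_le)
    moreover have "(\<Sum>P\<in>prime_sets (nat \<lfloor>x\<rfloor>). g P * (real (\<Prod>P) powr -1 * Mfun (-1) (x / real (\<Prod>P))))
        = - weighted_sum \<rho> (nat \<lfloor>x\<rfloor>)"
      unfolding weighted_sum_def sum_negf[symmetric]
    proof (intro sum.cong refl)
      fix P assume "P \<in> prime_sets (nat \<lfloor>x\<rfloor>)"
      note d = mem_prime_sets_floor_bounds[OF this]
      show "g P * (real (\<Prod>P) powr -1 * Mfun (-1) (x / real (\<Prod>P))) = - (g P * \<rho> (\<Prod>P))"
        unfolding \<rho>_def Mfun_def using d x by (simp add: powr_neg_one ln_div field_simps)
    qed
    ultimately show ?thesis
      using x by (simp add: Mfun_def powr_neg_one abs_minus_commute algebra_simps)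
  qed
  thus ?thesis using that[of "- Lc" "2 * K * S"] by simp
qed

lemma main_term_asymp:
  obtains C B where "\<And>x. 2 \<le> x \<Longrightarrow>
    \<bar>(\<Sum>P\<in>prime_sets (nat \<lfloor>x\<rfloor>). g P * (real (\<Prod>P) powr \<gamma> * Mfun \<gamma> (x / real (\<Prod>P))))
      - recip_series * Mfun \<gamma> x - C\<bar> \<le> B * x powr \<gamma> * ln x ^ a"
proof (cases "\<gamma> = -1")
  case True
  obtain C B where "\<And>x. 2 \<le> x \<Longrightarrow>
    \<bar>(\<Sum>P\<in>prime_sets (nat \<lfloor>x\<rfloor>). g P * (real (\<Prod>P) powr -1 * Mfun (-1) (x / real (\<Prod>P))))
      - recip_series * Mfun (-1) x - C\<bar> \<le> B * x powr -1 * ln x ^ a"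
    using main_term_asymp_ln by blast
  thus ?thesis using that unfolding True by blast
next
  case False
  obtain B where "\<And>x. 2 \<le> x \<Longrightarrow>
    \<bar>(\<Sum>P\<in>prime_sets (nat \<lfloor>x\<rfloor>). g P * (real (\<Prod>P) powr \<gamma> * Mfun \<gamma> (x / real (\<Prod>P))))
      - recip_series * Mfun \<gamma> x\<bar> \<le> B * x powr \<gamma> * ln x ^ a"
    using main_term_asymp_powr[OF False] by blast
  thus ?thesis using that[of 0 B] by simp
qed

lemma constant_term_asymp:
  assumes c: "0 \<le> \<gamma> \<Longrightarrow> c = 0"
  obtains C B where
    "\<And>x. 2 \<le> x \<Longrightarrow> \<bar>c * weighted_sum (\<lambda>d. real d powr \<gamma>) (nat \<lfloor>x\<rfloor>) - C\<bar> \<le> B * x powr \<gamma> * ln x ^ a"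
proof (cases "\<gamma> < 0")
  case True
  obtain L B where L: "\<And>x. 2 \<le> x \<Longrightarrow>
      \<bar>weighted_sum (\<lambda>d. real d powr \<gamma>) (nat \<lfloor>x\<rfloor>) - L\<bar> \<le> B * x powr \<gamma> * ln x ^ a"
    using weighted_sum_powr_asymp[OF True] by blast
  have "\<bar>c * weighted_sum (\<lambda>d. real d powr \<gamma>) (nat \<lfloor>x\<rfloor>) - c * L\<bar> \<le> \<bar>c\<bar> * B * x powr \<gamma> * ln x ^ a"
    if "2 \<le> x" for x
  proof -
    have "\<bar>c * weighted_sum (\<lambda>d. real d powr \<gamma>) (nat \<lfloor>x\<rfloor>) - c * L\<bar>
        = \<bar>c\<bar> * \<bar>weighted_sum (\<lambda>d. real d powr \<gamma>) (nat \<lfloor>x\<rfloor>) - L\<bar>"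
      by (simp add: right_diff_distrib flip: abs_mult)
    also have "\<dots> \<le> \<bar>c\<bar> * (B * x powr \<gamma> * ln x ^ a)" by (intro mult_left_mono L that) simp
    finally show ?thesis by (simp add: mult_ac)
  qed
  thus ?thesis by (rule that)
next
  case False
  thus ?thesis using that[of 0 0] c by simp
qed

lemma weighted_power_sums_split:
  assumes "0 \<le> x"
  shows "(\<Sum>P\<in>prime_sets (nat \<lfloor>x\<rfloor>). g P * (\<Sum>m=1..nat \<lfloor>x\<rfloor> div \<Prod>P. real (\<Prod>P * m) powr \<gamma>))
    = (\<Sum>P\<in>prime_sets (nat \<lfloor>x\<rfloor>). g P * (real (\<Prod>P) powr \<gamma> * Mfun \<gamma> (x / real (\<Prod>P))))
      + c * weighted_sum (\<lambda>d. real d powr \<gamma>) (nat \<lfloor>x\<rfloor>)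
      + (\<Sum>P\<in>prime_sets (nat \<lfloor>x\<rfloor>). g P * (real (\<Prod>P) powr \<gamma> *
          ((\<Sum>m=1..nat \<lfloor>x / real (\<Prod>P)\<rfloor>. real m powr \<gamma>) - Mfun \<gamma> (x / real (\<Prod>P)) - c)))"
proof -
  have "(\<Sum>m=1..nat \<lfloor>x\<rfloor> div \<Prod>P. real (\<Prod>P * m) powr \<gamma>)
      = real (\<Prod>P) powr \<gamma> * (\<Sum>m=1..nat \<lfloor>x / real (\<Prod>P)\<rfloor>. real m powr \<gamma>)"
    if P: "P \<in> prime_sets (nat \<lfloor>x\<rfloor>)" for P
  proof -
    have "nat \<lfloor>x\<rfloor> div \<Prod>P = nat \<lfloor>x / real (\<Prod>P)\<rfloor>"
      using P prod_primes_pos[of P] assms by (subst nat_floor_divide_eq) (auto simp: prime_sets_iff)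
    thus ?thesis by (simp add: powr_mult sum_distrib_left)
  qed
  thus ?thesis unfolding weighted_sum_def
    by (simp add: algebra_simps sum.distrib sum_distrib_left sum_subtractf cong: sum.cong)
qed

lemma weighted_power_sums_asymp:
  obtains C B where "\<And>x. 2 \<le> x \<Longrightarrow>
    \<bar>(\<Sum>P\<in>prime_sets (nat \<lfloor>x\<rfloor>). g P * (\<Sum>m=1..nat \<lfloor>x\<rfloor> div \<Prod>P. real (\<Prod>P * m) powr \<gamma>))
      - recip_series * Mfun \<gamma> x - C\<bar> \<le> B * x powr \<gamma> * ln x ^ a"
proof -
  obtain c A where A: "0 \<le> A" and c: "0 \<le> \<gamma> \<Longrightarrow> c = 0"
    and power_sum: "\<And>y. 1 \<le> y \<Longrightarrow> \<bar>(\<Sum>m=1..nat \<lfloor>y\<rfloor>. real m powr \<gamma>) - Mfun \<gamma> y - c\<bar> \<le> A * y powr \<gamma>"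
    using power_sum_asymp[where \<gamma> = \<gamma>] by metis
  obtain C1 B1 where main: "\<And>x. 2 \<le> x \<Longrightarrow>
    \<bar>(\<Sum>P\<in>prime_sets (nat \<lfloor>x\<rfloor>). g P * (real (\<Prod>P) powr \<gamma> * Mfun \<gamma> (x / real (\<Prod>P))))
      - recip_series * Mfun \<gamma> x - C1\<bar> \<le> B1 * x powr \<gamma> * ln x ^ a"
    using main_term_asymp by blast
  obtain C2 B2 where const: "\<And>x. 2 \<le> x \<Longrightarrow>
    \<bar>c * weighted_sum (\<lambda>d. real d powr \<gamma>) (nat \<lfloor>x\<rfloor>) - C2\<bar> \<le> B2 * x powr \<gamma> * ln x ^ a"
    using constant_term_asymp[OF c] by blast
  have "\<bar>(\<Sum>P\<in>prime_sets (nat \<lfloor>x\<rfloor>). g P * (\<Sum>m=1..nat \<lfloor>x\<rfloor> div \<Prod>P. real (\<Prod>P * m) powr \<gamma>))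
      - recip_series * Mfun \<gamma> x - (C1 + C2)\<bar> \<le> (B1 + B2 + A * K) * x powr \<gamma> * ln x ^ a"
    if x: "2 \<le> x" for x
  proof -
    define T1 where "T1 = (\<Sum>P\<in>prime_sets (nat \<lfloor>x\<rfloor>). g P * (real (\<Prod>P) powr \<gamma> * Mfun \<gamma> (x / real (\<Prod>P))))"
    define T2 where "T2 = c * weighted_sum (\<lambda>d. real d powr \<gamma>) (nat \<lfloor>x\<rfloor>)"
    define T3 where "T3 = (\<Sum>P\<in>prime_sets (nat \<lfloor>x\<rfloor>). g P * (real (\<Prod>P) powr \<gamma> *
          ((\<Sum>m=1..nat \<lfloor>x / real (\<Prod>P)\<rfloor>. real m powr \<gamma>) - Mfun \<gamma> (x / real (\<Prod>P)) - c)))"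
    have "\<bar>T3\<bar> \<le> A * K * x powr \<gamma> * ln x ^ a" unfolding T3_def by (rule error_term_le[OF power_sum A x])
    thus ?thesis using weighted_power_sums_split[of x \<gamma> c] main[OF x] const[OF x] x
      unfolding T1_def[symmetric] T2_def[symmetric] T3_def[symmetric] by (simp add: algebra_simps)
  qed
  thus ?thesis by (rule that)
qed

lemma partial_euler_product_eq:
  assumes mult: "\<And>P. g P = (\<Prod>p\<in>P. g {p})" and "finite A"
  shows "(\<Prod>p\<in>A. 1 + g {p} / real p) = (\<Sum>P\<in>Pow A. g P * (1 / real (\<Prod>P)))"
proof -
  have "(\<Prod>p\<in>A. 1 + g {p} / real p) = (\<Sum>P\<in>Pow A. (\<Prod>p\<in>P. g {p} / real p) * (\<Prod>p\<in>A - P. 1))"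
    using prod_add[OF assms(2), of "\<lambda>p. g {p} / real p" "\<lambda>_. 1"] by (simp add: add.commute)
  also have "\<dots> = (\<Sum>P\<in>Pow A. g P * (1 / real (\<Prod>P)))"
  proof (intro sum.cong refl)
    fix P
    show "(\<Prod>p\<in>P. g {p} / real p) * (\<Prod>p\<in>A - P. 1) = g P * (1 / real (\<Prod>P))"
      unfolding mult[of P] by (simp add: prod_dividef)
  qed
  finally show ?thesis .
qed

text \<open>The partial Euler product over \<open>p \<le> N\<close> runs over all squarefree \<open>d\<close> with prime factors
  \<open>\<le> N\<close>; those with \<open>d > N\<close> form a dyadic tail beyond \<open>N\<close>.\<close>

lemma partial_euler_product_minus_weighted_sum_le:
  assumes mult: "\<And>P. g P = (\<Prod>p\<in>P. g {p})" and N: "2 \<le> N"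
  shows "\<bar>(\<Prod>p | prime p \<and> p \<le> N. 1 + g {p} / real p) - weighted_sum (\<lambda>d. 1 / real d) N\<bar>
    \<le> K * (1 / real N) * ln (real N) ^ a * (\<Sum>k. real (k+2) ^ a * (1/2) ^ k)"
proof -
  define Pr where "Pr = {p::nat. prime p \<and> p \<le> N}"
  have finPr: "finite Pr" unfolding Pr_def by (rule finite_subset[of _ "{..N}"]) auto
  have "prime_sets N \<subseteq> Pow Pr" unfolding prime_sets_def Pr_def by auto
  hence "(\<Prod>p\<in>Pr. 1 + g {p} / real p) = (\<Sum>P\<in>Pow Pr - prime_sets N. g P * (1 / real (\<Prod>P)))
      + weighted_sum (\<lambda>d. 1 / real d) N"
    unfolding partial_euler_product_eq[OF mult finPr] weighted_sum_def using finPr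
    by (intro sum.subset_diff) auto
  hence "\<bar>(\<Prod>p\<in>Pr. 1 + g {p} / real p) - weighted_sum (\<lambda>d. 1 / real d) N\<bar>
      \<le> (\<Sum>P\<in>Pow Pr - prime_sets N. \<bar>g P\<bar> * \<bar>1 / real (\<Prod>P)\<bar>)"
    using sum_abs[of "\<lambda>P. g P * (1 / real (\<Prod>P))"] by (simp add: abs_mult)
  also have "\<dots> \<le> K * (1 / real N) * ln (real N) ^ a * (\<Sum>k. real (k+2) ^ a * (1/2) ^ k)"
  proof (rule dyadic_tail_le[where M = "\<Prod>Pr"])
    show "Pow Pr - prime_sets N \<subseteq> prime_sets (\<Prod>Pr) - prime_sets (nat \<lfloor>real N\<rfloor>)"
    proof
      fix P assume P: "P \<in> Pow Pr - prime_sets N"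
      hence fin: "finite P" and primes: "\<forall>p\<in>P. prime p"
        using finite_subset[OF _ finPr] by (auto simp: Pr_def)
      have "\<Prod>P \<le> \<Prod>Pr" using P finPr by (intro prod_primes_ge) (auto simp: Pr_def)
      thus "P \<in> prime_sets (\<Prod>Pr) - prime_sets (nat \<lfloor>real N\<rfloor>)"
        using P fin primes by (simp add: prime_sets_iff)
    qed
    show "\<And>k d. 2^k * real N < real d \<Longrightarrow> real d \<le> 2^(k+1) * real N \<Longrightarrow>
        \<bar>1 / real d\<bar> \<le> 1 / real N * (1/2)^k"
      using N by (intro recip_le_dyadic) auto
  qed (use N in auto)
  finally show ?thesis unfolding Pr_def .
qed

lemma euler_product_tendsto_recip_series:
  assumes mult: "\<And>P. g P = (\<Prod>p\<in>P. g {p})"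
  shows "(\<lambda>N. \<Prod>p | prime p \<and> p \<le> N. 1 + g {p} / real p) \<longlonglongrightarrow> recip_series"
proof -
  define U where "U N = (\<Prod>p | prime p \<and> p \<le> N. 1 + g {p} / real p)" for N
  define S where "S = (\<Sum>k. real (k+2) ^ a * (1/2::real) ^ k)"
  have "(\<lambda>N. U N - weighted_sum (\<lambda>d. 1 / real d) N) \<longlonglongrightarrow> 0"
  proof (rule Lim_null_comparison)
    show "eventually (\<lambda>N. norm (U N - weighted_sum (\<lambda>d. 1 / real d) N)
        \<le> K * (1 / real N) * ln (real N) ^ a * S) sequentially"
      unfolding U_def S_def eventually_sequentially
      using partial_euler_product_minus_weighted_sum_le[OF mult] by (intro exI[of _ 2]) auto
    have "(\<lambda>N. K * (1 / real N * ln (real N) ^ a) * S) \<longlonglongrightarrow> K * 0 * S"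
      by (intro tendsto_mult tendsto_const) real_asymp
    thus "(\<lambda>N. K * (1 / real N) * ln (real N) ^ a * S) \<longlonglongrightarrow> 0" by (simp add: mult.assoc)
  qed
  moreover have "weighted_sum (\<lambda>d. 1 / real d) \<longlonglongrightarrow> recip_series"
    using weighted_sum_recip_asymp by blast
  ultimately have "(\<lambda>N. (U N - weighted_sum (\<lambda>d. 1 / real d) N) + weighted_sum (\<lambda>d. 1 / real d) N)
      \<longlonglongrightarrow> 0 + recip_series"
    by (rule tendsto_add)
  thus ?thesis by (simp add: U_def)
qed

end

lemma jordan_coeff_multiplicative: "jordan_coeff r e P = (\<Prod>p\<in>P. jordan_coeff r e {p})"
  by (simp add: jordan_coeff_def)

lemma sing_series_eq_lim:
  "sing_series r e = lim (\<lambda>N. \<Prod>p | prime p \<and> p \<le> N. 1 + jordan_coeff r e {p} / real p)"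
proof -
  have "jordan_quot r e p * real p powr (- real_of_int (weight r e)) = jordan_local r e p" if "prime p" for p
    using jordan_quot_mult_powr[of p r e "- real_of_int (weight r e)"] that
    by (simp add: prime_prime_factors prime_gt_0_nat Suc_leI)
  thus ?thesis
    unfolding sing_series_def jordan_coeff_def by (intro arg_cong[where f = lim] ext prod.cong) auto
qed

lemma sum_multiples_eq:
  fixes f :: "nat \<Rightarrow> 'a::comm_monoid_add"
  assumes "0 < d"
  shows "(\<Sum>n | n \<in> {1..N} \<and> d dvd n. f n) = (\<Sum>m=1..N div d. f (d * m))"
proof -
  have "{n. n \<in> {1..N} \<and> d dvd n} = (\<lambda>m. d * m) ` {1..N div d}"
  proof (intro equalityI subsetI)
    fix n assume n: "n \<in> {n. n \<in> {1..N} \<and> d dvd n}"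
    then obtain m where m: "n = d * m" by (auto elim: dvdE)
    have "1 \<le> m" using n m by (cases m) auto
    moreover have "m \<le> N div d" using n m assms by (simp add: less_eq_div_iff_mult_less_eq mult.commute)
    ultimately show "n \<in> (\<lambda>m. d * m) ` {1..N div d}" using m by auto
  next
    fix n assume "n \<in> (\<lambda>m. d * m) ` {1..N div d}"
    then obtain m where m: "n = d * m" "m \<in> {1..N div d}" by blast
    have "d * m \<le> d * (N div d)" using m by simp
    also have "\<dots> \<le> N" by simp
    finally show "n \<in> {n. n \<in> {1..N} \<and> d dvd n}"
      using m assms by (simp add: Suc_le_eq)
  qed
  moreover have "inj_on (\<lambda>m. d * m) {1..N div d}" using assms by (intro inj_onI) auto
  ultimately show ?thesis by (simp add: sum.reindex)
qed

lemma sum_jordan_quot_eq: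
  "(\<Sum>n=1..N. jordan_quot r e n * real n powr \<beta>) =
     (\<Sum>P\<in>prime_sets N. jordan_coeff r e P *
        (\<Sum>m=1..N div \<Prod>P. real (\<Prod>P * m) powr (\<beta> + real_of_int (weight r e))))"
proof -
  define \<gamma> where "\<gamma> = \<beta> + real_of_int (weight r e)"
  have "jordan_quot r e n * real n powr \<beta> =
      (\<Sum>P | P \<in> prime_sets N \<and> \<Prod>P dvd n. real n powr \<gamma> * jordan_coeff r e P)"
    if n: "n \<in> {1..N}" for n
  proof -
    have "Pow (prime_factors n) = {P. P \<in> prime_sets N \<and> \<Prod>P dvd n}"
    proof (intro equalityI subsetI)
      fix P assume P: "P \<in> Pow (prime_factors n)"
      hence "finite P" "\<forall>p\<in>P. prime p" by (auto intro: finite_subset simp: in_prime_factors_iff)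
      moreover from this have "\<Prod>P dvd n" using P n prod_primes_dvd_iff[of n P] by auto
      moreover from this have "\<Prod>P \<le> N" using n by (auto dest: dvd_imp_le)
      ultimately show "P \<in> {P. P \<in> prime_sets N \<and> \<Prod>P dvd n}" by (simp add: prime_sets_iff)
    next
      fix P assume "P \<in> {P. P \<in> prime_sets N \<and> \<Prod>P dvd n}"
      thus "P \<in> Pow (prime_factors n)" using n prod_primes_dvd_iff[of n P] by (auto simp: prime_sets_iff)
    qed
    thus ?thesis using n jordan_quot_mult_powr[of n r e \<beta>]
      by (simp add: prod_jordan_local_eq_sum_coeff sum_distrib_left \<gamma>_def)
  qed
  hence "(\<Sum>n=1..N. jordan_quot r e n * real n powr \<beta>) =
      (\<Sum>n=1..N. \<Sum>P | P \<in> prime_sets N \<and> \<Prod>P dvd n. real n powr \<gamma> * jordan_coeff r e P)"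
    by (rule sum.cong[OF refl])
  also have "\<dots> = (\<Sum>P\<in>prime_sets N. \<Sum>n | n \<in> {1..N} \<and> \<Prod>P dvd n. real n powr \<gamma> * jordan_coeff r e P)"
    by (rule sum.swap_restrict) (auto simp: finite_prime_sets)
  also have "\<dots> = (\<Sum>P\<in>prime_sets N. jordan_coeff r e P * (\<Sum>m=1..N div \<Prod>P. real (\<Prod>P * m) powr \<gamma>))"
  proof (intro sum.cong refl)
    fix P assume "P \<in> prime_sets N"
    hence d: "0 < \<Prod>P" using prod_primes_pos[of P] by (simp add: prime_sets_iff)
    show "(\<Sum>n | n \<in> {1..N} \<and> \<Prod>P dvd n. real n powr \<gamma> * jordan_coeff r e P)
        = jordan_coeff r e P * (\<Sum>m=1..N div \<Prod>P. real (\<Prod>P * m) powr \<gamma>)"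
      by (subst sum_multiples_eq[OF d]) (simp add: sum_distrib_left mult.commute)
  qed
  finally show ?thesis unfolding \<gamma>_def .
qed

theorem mainTheorem5:
  fixes r :: nat and e :: "nat \<Rightarrow> int" and \<beta> :: real
  assumes "1 \<le> r"
  shows "\<exists>C K. \<forall>x::real. x \<ge> 2 \<longrightarrow>
     \<bar>(\<Sum>n=1..nat \<lfloor>x\<rfloor>. jordan_quot r e n * real n powr \<beta>)
        - sing_series r e * Mfun (\<beta> + real_of_int (weight r e)) x - C\<bar>
     \<le> K * x powr (\<beta> + real_of_int (weight r e)) * ln x ^ nat \<bar>e 1\<bar>"
proof -
  obtain K where "log_bounded_weights (jordan_coeff r e) (nat \<bar>e 1\<bar>) K"
    using sum_abs_jordan_coeff_le[OF assms] unfolding log_bounded_weights_def by blast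
  then interpret log_bounded_weights "jordan_coeff r e" "nat \<bar>e 1\<bar>" K .
  have "sing_series r e = recip_series"
    unfolding sing_series_eq_lim
    using euler_product_tendsto_recip_series[OF jordan_coeff_multiplicative] by (rule limI)
  moreover obtain C B where "\<And>x. 2 \<le> x \<Longrightarrow>
      \<bar>(\<Sum>P\<in>prime_sets (nat \<lfloor>x\<rfloor>). jordan_coeff r e P *
          (\<Sum>m=1..nat \<lfloor>x\<rfloor> div \<Prod>P. real (\<Prod>P * m) powr (\<beta> + real_of_int (weight r e))))
        - recip_series * Mfun (\<beta> + real_of_int (weight r e)) x - C\<bar>
      \<le> B * x powr (\<beta> + real_of_int (weight r e)) * ln x ^ nat \<bar>e 1\<bar>"
    using weighted_power_sums_asymp by blast
  ultimately show ?thesis unfolding sum_jordan_quot_eq by auto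
qed

end
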